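(* The following are equivalent for an integral domain $D$: (1) for every nonzero nonunit $x$ of $D$, $xD$ is a $\ast$-product of finitely many $\ast$-super homog ideals of type $1$; (2) $D$ is a $\ast$-GKD.
   Context: $\ast$ is a star operation on $D$ of finite character. A $\ast$-ideal is a nonzero fractional ideal $I$ with $I^\ast=I$; of finite type if $I=J^\ast$ for some nonzero finitely generated $J$. A maximal $\ast$-ideal is an integral $\ast$-ideal maximal among proper integral $\ast$-ideals. $I$ is $\ast$-invertible if $(II^{-1})^\ast=D$. A $\ast$-homog ideal is a proper integral $\ast$-ideal $I$ of finite type such that $(A+B)^\ast\neq D$ for every pair $A,B$ of proper integral $\ast$-ideals of finite type containing $I$; it lies in a unique maximal $\ast$-ideal $M(I)$. A $\ast$-homog ideal $I$ is of type $1$ if for every $x\in M(I)\setminus\{0\}$ there is $n\ge1$ with $x^nD_{M(I)}\cap D\subseteq I$. A $\ast$-super homog ideal is a $\ast$-homog ideal $I$ such that every $\ast$-ideal of finite type containing $I$ is $\ast$-invertible; it is of type $1$ if it is also a $\ast$-homog ideal of type $1$. $D$ is a $\ast$-IRKT if $D_P$ is a valuation domain for every maximal $\ast$-ideal $P$, $D=\bigcap_P D_P$ over the maximal $\ast$-ideals with the intersection locally finite, and no two distinct maximal $\ast$-ideals contain a common nonzero prime ideal. $D$ is a $\ast$-GKD if it is a $\ast$-IRKT all of whose maximal $\ast$-ideals have height $1$. *)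

theory Defs
  imports Main
begin

text \<open>Setting: an integral domain D is represented as a subring of a field of type 'a
whose elements are all quotients of elements of D (so 'a is the quotient field K of D).\<close>

definition is_domain_in :: "'a::field set \<Rightarrow> bool" where
  "is_domain_in D \<longleftrightarrow> 0 \<in> D \<and> 1 \<in> D \<and>
     (\<forall>a\<in>D. \<forall>b\<in>D. a + b \<in> D \<and> a - b \<in> D \<and> a * b \<in> D) \<and>
     (\<forall>x. \<exists>a\<in>D. \<exists>b\<in>D. b \<noteq> 0 \<and> x = a / b)"

definition submod :: "'a::field set \<Rightarrow> 'a set \<Rightarrow> bool" where
  "submod D I \<longleftrightarrow> 0 \<in> I \<and> (\<forall>a\<in>I. \<forall>b\<in>I. a + b \<in> I) \<and> (\<forall>d\<in>D. \<forall>a\<in>I. d * a \<in> I)"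

definition frac_ideal :: "'a::field set \<Rightarrow> 'a set \<Rightarrow> bool" where
  "frac_ideal D I \<longleftrightarrow> submod D I \<and> (\<exists>d\<in>D. d \<noteq> 0 \<and> (\<forall>x\<in>I. d * x \<in> D))"

definition nz_frac :: "'a::field set \<Rightarrow> 'a set \<Rightarrow> bool" where
  "nz_frac D I \<longleftrightarrow> frac_ideal D I \<and> I \<noteq> {0}"

definition principal_frac :: "'a::field set \<Rightarrow> 'a \<Rightarrow> 'a set" where
  "principal_frac D x = (\<lambda>d. x * d) ` D"

definition smul_set :: "'a::field \<Rightarrow> 'a set \<Rightarrow> 'a set" where
  "smul_set x A = (\<lambda>a. x * a) ` A"

definition gen :: "'a::field set \<Rightarrow> 'a set \<Rightarrow> 'a set" where
  "gen D F = {x. \<exists>c. (\<forall>f\<in>F. c f \<in> D) \<and> x = (\<Sum>f\<in>F. c f * f)}"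

definition fin_gen_nz :: "'a::field set \<Rightarrow> 'a set \<Rightarrow> bool" where
  "fin_gen_nz D J \<longleftrightarrow> (\<exists>F. finite F \<and> J = gen D F) \<and> J \<noteq> {0}"

definition ideal_add :: "'a::field set \<Rightarrow> 'a set \<Rightarrow> 'a set" where
  "ideal_add A B = {a + b | a b. a \<in> A \<and> b \<in> B}"

definition ideal_mult :: "'a::field set \<Rightarrow> 'a set \<Rightarrow> 'a set" where
  "ideal_mult A B = {x. \<exists>(n::nat) f g. (\<forall>i<n. f i \<in> A \<and> g i \<in> B) \<and> x = (\<Sum>i<n. f i * g i)}"

fun ideal_prod :: "'a::field set \<Rightarrow> 'a set list \<Rightarrow> 'a set" where
  "ideal_prod D [] = D"
| "ideal_prod D (I # Is) = ideal_mult I (ideal_prod D Is)"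

definition inv_ideal :: "'a::field set \<Rightarrow> 'a set \<Rightarrow> 'a set" where
  "inv_ideal D I = {x. \<forall>a\<in>I. x * a \<in> D}"

definition star_op :: "'a::field set \<Rightarrow> ('a set \<Rightarrow> 'a set) \<Rightarrow> bool" where
  "star_op D st \<longleftrightarrow>
     (\<forall>A. nz_frac D A \<longrightarrow> nz_frac D (st A)) \<and>
     (\<forall>x. x \<noteq> 0 \<longrightarrow> st (principal_frac D x) = principal_frac D x) \<and>
     (\<forall>x A. x \<noteq> 0 \<longrightarrow> nz_frac D A \<longrightarrow> st (smul_set x A) = smul_set x (st A)) \<and>
     (\<forall>A B. nz_frac D A \<longrightarrow> nz_frac D B \<longrightarrow> A \<subseteq> B \<longrightarrow> st A \<subseteq> st B) \<and>
     (\<forall>A. nz_frac D A \<longrightarrow> A \<subseteq> st A) \<and>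
     (\<forall>A. nz_frac D A \<longrightarrow> st (st A) = st A)"

definition finite_character :: "'a::field set \<Rightarrow> ('a set \<Rightarrow> 'a set) \<Rightarrow> bool" where
  "finite_character D st \<longleftrightarrow>
     (\<forall>A. nz_frac D A \<longrightarrow> st A = \<Union>{st J | J. fin_gen_nz D J \<and> J \<subseteq> A})"

definition star_ideal :: "'a::field set \<Rightarrow> ('a set \<Rightarrow> 'a set) \<Rightarrow> 'a set \<Rightarrow> bool" where
  "star_ideal D st I \<longleftrightarrow> nz_frac D I \<and> st I = I"

definition finite_type :: "'a::field set \<Rightarrow> ('a set \<Rightarrow> 'a set) \<Rightarrow> 'a set \<Rightarrow> bool" where
  "finite_type D st I \<longleftrightarrow> star_ideal D st I \<and> (\<exists>J. fin_gen_nz D J \<and> I = st J)"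

definition max_star :: "'a::field set \<Rightarrow> ('a set \<Rightarrow> 'a set) \<Rightarrow> 'a set \<Rightarrow> bool" where
  "max_star D st M \<longleftrightarrow> star_ideal D st M \<and> M \<subseteq> D \<and> M \<noteq> D \<and>
     (\<forall>J. star_ideal D st J \<and> J \<subseteq> D \<and> J \<noteq> D \<and> M \<subseteq> J \<longrightarrow> J = M)"

definition star_invertible :: "'a::field set \<Rightarrow> ('a set \<Rightarrow> 'a set) \<Rightarrow> 'a set \<Rightarrow> bool" where
  "star_invertible D st I \<longleftrightarrow> st (ideal_mult I (inv_ideal D I)) = D"

definition localization :: "'a::field set \<Rightarrow> 'a set \<Rightarrow> 'a set" where
  "localization D P = {a / s | a s. a \<in> D \<and> s \<in> D \<and> s \<notin> P}"

definition star_homog :: "'a::field set \<Rightarrow> ('a set \<Rightarrow> 'a set) \<Rightarrow> 'a set \<Rightarrow> bool" where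
  "star_homog D st I \<longleftrightarrow> I \<subseteq> D \<and> I \<noteq> D \<and> finite_type D st I \<and>
     (\<forall>A B. finite_type D st A \<and> A \<subseteq> D \<and> A \<noteq> D \<and> I \<subseteq> A \<and>
            finite_type D st B \<and> B \<subseteq> D \<and> B \<noteq> D \<and> I \<subseteq> B
            \<longrightarrow> st (ideal_add A B) \<noteq> D)"

text \<open>the unique maximal star-ideal containing I\<close>
definition M_of :: "'a::field set \<Rightarrow> ('a set \<Rightarrow> 'a set) \<Rightarrow> 'a set \<Rightarrow> 'a set" where
  "M_of D st I = (THE M. max_star D st M \<and> I \<subseteq> M)"

definition star_homog_type1 :: "'a::field set \<Rightarrow> ('a set \<Rightarrow> 'a set) \<Rightarrow> 'a set \<Rightarrow> bool" where
  "star_homog_type1 D st I \<longleftrightarrow> star_homog D st I \<and>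
     (\<forall>x \<in> M_of D st I - {0}. \<exists>n\<ge>1.
        principal_frac (localization D (M_of D st I)) (x ^ n) \<inter> D \<subseteq> I)"

definition star_super_homog :: "'a::field set \<Rightarrow> ('a set \<Rightarrow> 'a set) \<Rightarrow> 'a set \<Rightarrow> bool" where
  "star_super_homog D st I \<longleftrightarrow> star_homog D st I \<and>
     (\<forall>J. finite_type D st J \<and> I \<subseteq> J \<longrightarrow> star_invertible D st J)"

definition star_super_homog_type1 :: "'a::field set \<Rightarrow> ('a set \<Rightarrow> 'a set) \<Rightarrow> 'a set \<Rightarrow> bool" where
  "star_super_homog_type1 D st I \<longleftrightarrow> star_super_homog D st I \<and> star_homog_type1 D st I"

definition prime_ideal_in :: "'a::field set \<Rightarrow> 'a set \<Rightarrow> bool" where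
  "prime_ideal_in D P \<longleftrightarrow> submod D P \<and> P \<subseteq> D \<and> P \<noteq> D \<and>
     (\<forall>a\<in>D. \<forall>b\<in>D. a * b \<in> P \<longrightarrow> a \<in> P \<or> b \<in> P)"

definition height_one :: "'a::field set \<Rightarrow> 'a set \<Rightarrow> bool" where
  "height_one D P \<longleftrightarrow> prime_ideal_in D P \<and> P \<noteq> {0} \<and>
     (\<forall>Q. prime_ideal_in D Q \<and> Q \<noteq> {0} \<and> Q \<subseteq> P \<longrightarrow> Q = P)"

text \<open>valuation domain inside the field 'a (the quotient field of D_P is 'a)\<close>
definition valuation_domain_in :: "'a::field set \<Rightarrow> bool" where
  "valuation_domain_in V \<longleftrightarrow> is_domain_in V \<and> (\<forall>x. x \<noteq> 0 \<longrightarrow> x \<in> V \<or> inverse x \<in> V)"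

definition star_IRKT :: "'a::field set \<Rightarrow> ('a set \<Rightarrow> 'a set) \<Rightarrow> bool" where
  "star_IRKT D st \<longleftrightarrow>
     (\<forall>P. max_star D st P \<longrightarrow> valuation_domain_in (localization D P)) \<and>
     D = \<Inter>{localization D P | P. max_star D st P} \<and>
     (\<forall>x\<in>D. x \<noteq> 0 \<longrightarrow> finite {P. max_star D st P \<and> x \<in> P}) \<and>
     (\<forall>P Q. max_star D st P \<and> max_star D st Q \<and> P \<noteq> Q \<longrightarrow>
        \<not> (\<exists>R. prime_ideal_in D R \<and> R \<noteq> {0} \<and> R \<subseteq> P \<and> R \<subseteq> Q))"

definition star_GKD :: "'a::field set \<Rightarrow> ('a set \<Rightarrow> 'a set) \<Rightarrow> bool" where
  "star_GKD D st \<longleftrightarrow> star_IRKT D st \<and> (\<forall>P. max_star D st P \<longrightarrow> height_one D P)"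

end

theory Submission
  imports Defs
begin

text \<open>
  A super homogeneous ideal \<open>I\<close> inside a maximal star ideal \<open>P\<close> makes \<open>D\<^sub>P\<close> a
  valuation domain: for \<open>x \<noteq> 0\<close> the finite type ideal generated by the generators of \<open>I\<close> and their
  \<open>x\<close>-multiples contains \<open>I\<close>, hence is star-invertible and so principal at \<open>P\<close>, generated by one of
  its generators. Factoring \<open>x D\<close> bounds the maximal star ideals containing \<open>x\<close> by the \<open>M(I)\<close> of its
  factors; uniqueness of \<open>M(I)\<close> forbids two of them to share a nonzero prime; and the type \<open>1\<close>
  condition puts a power of every element of \<open>P\<close> into any nonzero prime below \<open>P\<close>.

  In a star-GKD, \<open>x D\<close> is the star product of its components \<open>x D\<^sub>P \<inter> D\<close> over the
  finitely many maximal star ideals \<open>P \<ni> x\<close>; both sides are star ideals agreeing after localization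
  at every maximal star ideal. Each component is super homogeneous of type \<open>1\<close>, since every element
  of \<open>P\<close> has a power in \<open>x D\<^sub>P\<close> (as \<open>D\<^sub>P\<close> is a valuation domain and \<open>P\<close> has height one) and every
  finite type ideal is star-invertible (being locally principal).
\<close>

definition localize :: "'a::field set \<Rightarrow> 'a set \<Rightarrow> 'a set \<Rightarrow> 'a set" where
  "localize D A M = {a / s | a s. a \<in> A \<and> s \<in> D \<and> s \<notin> M}"

definition super_homog_factorial :: "'a::field set \<Rightarrow> ('a set \<Rightarrow> 'a set) \<Rightarrow> bool" where
  "super_homog_factorial D st \<longleftrightarrow> (\<forall>x\<in>D. x \<noteq> 0 \<and> inverse x \<notin> D \<longrightarrow>
     (\<exists>Is. (\<forall>I\<in>set Is. star_super_homog_type1 D st I) \<and> principal_frac D x = st (ideal_prod D Is)))"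

definition principal_component :: "'a::field set \<Rightarrow> 'a \<Rightarrow> 'a set \<Rightarrow> 'a set" where
  "principal_component D x P = principal_frac (localization D P) x \<inter> D"

lemma sum_lessThan_add_if:
  fixes f g :: "nat \<Rightarrow> 'b::comm_monoid_add"
  shows "(\<Sum>i<n+m. if i < n then f i else g (i - n)) = (\<Sum>i<n. f i) + (\<Sum>i<m. g i)"
  by (induction m) (simp_all add: add.assoc)

lemma ideal_add_decompose:
  assumes "G \<subseteq> ideal_add P Q"
  obtains p q where "\<And>g. g \<in> G \<Longrightarrow> p g \<in> P \<and> q g \<in> Q \<and> g = p g + q g"
proof -
  have "\<forall>g\<in>G. \<exists>pq. fst pq \<in> P \<and> snd pq \<in> Q \<and> g = fst pq + snd pq"
    using assms unfolding ideal_add_def by fastforce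
  then obtain pq where "\<forall>g\<in>G. fst (pq g) \<in> P \<and> snd (pq g) \<in> Q \<and> g = fst (pq g) + snd (pq g)"
    using bchoice[of G] by meson
  then show thesis by (intro that[of "fst \<circ> pq" "snd \<circ> pq"]) auto
qed

locale quotient_domain =
  fixes D :: "'a::field set"
  assumes domain: "is_domain_in D"
begin

lemma zero_in_D: "0 \<in> D" and one_in_D: "1 \<in> D"
  using domain by (auto simp: is_domain_in_def)

lemma add_in_D: "a \<in> D \<Longrightarrow> b \<in> D \<Longrightarrow> a + b \<in> D"
  and diff_in_D: "a \<in> D \<Longrightarrow> b \<in> D \<Longrightarrow> a - b \<in> D"
  and mult_in_D: "a \<in> D \<Longrightarrow> b \<in> D \<Longrightarrow> a * b \<in> D"
  using domain by (auto simp: is_domain_in_def)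

lemma fraction_of_D: obtains a b where "a \<in> D" "b \<in> D" "b \<noteq> 0" "x = a / b"
  using domain unfolding is_domain_in_def by blast

lemma power_in_D: "a \<in> D \<Longrightarrow> a ^ n \<in> D"
  by (induction n) (auto intro: one_in_D mult_in_D)

lemma of_nat_in_D: "of_nat n \<in> D"
  by (induction n) (auto intro: zero_in_D one_in_D add_in_D)

lemma sum_in_D: "(\<And>i. i \<in> S \<Longrightarrow> f i \<in> D) \<Longrightarrow> sum f S \<in> D"
  by (induction S rule: infinite_finite_induct) (auto intro: zero_in_D add_in_D)

lemma common_denominator:
  assumes "finite X" shows "\<exists>d\<in>D. d \<noteq> 0 \<and> (\<forall>x\<in>X. d * x \<in> D)"
  using assms
proof (induction X rule: finite_induct)
  case empty then show ?case using one_in_D by (intro bexI[of _ 1]) auto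
next
  case (insert x F)
  then obtain d where d: "d \<in> D" "d \<noteq> 0" "\<forall>y\<in>F. d * y \<in> D" by auto
  obtain a b where ab: "a \<in> D" "b \<in> D" "b \<noteq> 0" "x = a / b" by (rule fraction_of_D)
  have "d * b * x = d * a" using ab by simp
  then have "d * b * x \<in> D" using ab d mult_in_D by simp
  moreover have "\<forall>y\<in>F. d * b * y \<in> D" using d ab mult_in_D by (metis mult.commute mult.left_commute)
  ultimately show ?case using d ab mult_in_D by (intro bexI[of _ "d * b"]) auto
qed

lemma submod_0: "submod D I \<Longrightarrow> 0 \<in> I"
  and submod_add: "submod D I \<Longrightarrow> a \<in> I \<Longrightarrow> b \<in> I \<Longrightarrow> a + b \<in> I"
  and submod_mult: "submod D I \<Longrightarrow> d \<in> D \<Longrightarrow> a \<in> I \<Longrightarrow> d * a \<in> I"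
  by (simp_all add: submod_def)

lemma submod_sum: "submod D I \<Longrightarrow> (\<And>i. i \<in> S \<Longrightarrow> f i \<in> I) \<Longrightarrow> sum f S \<in> I"
  by (induction S rule: infinite_finite_induct) (auto intro: submod_0 submod_add)

lemma submod_D: "submod D D"
  by (auto simp: submod_def zero_in_D add_in_D mult_in_D)

lemma submod_Union_chain:
  assumes C: "C \<noteq> {}" "\<And>X. X \<in> C \<Longrightarrow> submod D X" and ch: "\<forall>X\<in>C. \<forall>Y\<in>C. X \<subseteq> Y \<or> Y \<subseteq> X"
  shows "submod D (\<Union>C)"
proof -
  have "a + b \<in> \<Union>C" if "a \<in> \<Union>C" "b \<in> \<Union>C" for a b
  proof -
    from that obtain X Y where XY: "X \<in> C" "Y \<in> C" "a \<in> X" "b \<in> Y" by blast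
    show ?thesis
    proof (cases "X \<subseteq> Y")
      case True then show ?thesis using XY submod_add[OF C(2)[OF XY(2)]] by blast
    next
      case False
      then have "Y \<subseteq> X" using ch XY by blast
      then show ?thesis using XY submod_add[OF C(2)[OF XY(1)]] by blast
    qed
  qed
  moreover have "d * a \<in> \<Union>C" if "d \<in> D" "a \<in> \<Union>C" for d a
    using that C(2) submod_mult by blast
  moreover have "0 \<in> \<Union>C" using C submod_0 by blast
  ultimately show ?thesis unfolding submod_def by blast
qed

lemma submod_eq_D_if_one: "submod D I \<Longrightarrow> I \<subseteq> D \<Longrightarrow> 1 \<in> I \<Longrightarrow> I = D"
  using submod_mult[of I _ 1] by force

lemma nz_fracI:
  "submod D I \<Longrightarrow> d \<in> D \<Longrightarrow> d \<noteq> 0 \<Longrightarrow> (\<And>x. x \<in> I \<Longrightarrow> d * x \<in> D) \<Longrightarrow> a \<in> I \<Longrightarrow> a \<noteq> 0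
    \<Longrightarrow> nz_frac D I"
  unfolding nz_frac_def frac_ideal_def by blast

lemma nz_frac_if_integral: "submod D I \<Longrightarrow> I \<subseteq> D \<Longrightarrow> I \<noteq> {0} \<Longrightarrow> nz_frac D I"
  unfolding nz_frac_def frac_ideal_def using one_in_D by (intro conjI bexI[of _ 1]) auto

lemma nz_frac_submod: "nz_frac D I \<Longrightarrow> submod D I"
  by (simp add: nz_frac_def frac_ideal_def)

lemma nz_frac_denominator:
  assumes "nz_frac D I" obtains d where "d \<in> D" "d \<noteq> 0" "\<And>x. x \<in> I \<Longrightarrow> d * x \<in> D"
  using assms unfolding nz_frac_def frac_ideal_def by blast

lemma nz_frac_nonzero_elem: "nz_frac D I \<Longrightarrow> \<exists>a\<in>I. a \<noteq> 0"
  unfolding nz_frac_def frac_ideal_def submod_def by auto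

lemma nz_frac_D: "nz_frac D D"
  using nz_frac_if_integral[OF submod_D] one_in_D by fastforce

lemma principal_frac_eq_smul_set: "principal_frac D x = smul_set x D"
  by (simp add: principal_frac_def smul_set_def)

lemma principal_frac_one: "principal_frac D 1 = D"
  by (simp add: principal_frac_def)

lemma smul_set_nz_frac:
  assumes A: "nz_frac D A" and x0: "x \<noteq> 0"
  shows "nz_frac D (smul_set x A)"
proof -
  have sA: "submod D A" using A by (rule nz_frac_submod)
  have "x * a + x * b = x * (a + b)" "d * (x * a) = x * (d * a)" for a b d
    by (simp_all add: algebra_simps)
  then have sxA: "submod D (smul_set x A)"
    using submod_0[OF sA] submod_add[OF sA] submod_mult[OF sA]
    unfolding submod_def smul_set_def by (auto intro!: image_eqI[of _ "(*) x"])
  obtain d where d: "d \<in> D" "d \<noteq> 0" "\<And>y. y \<in> A \<Longrightarrow> d * y \<in> D"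
    using nz_frac_denominator[OF A] by metis
  obtain a b where ab: "a \<in> D" "b \<in> D" "b \<noteq> 0" "x = a / b" by (rule fraction_of_D)
  have bd: "b * d * y \<in> D" if "y \<in> smul_set x A" for y
  proof -
    from that obtain y' where "y' \<in> A" "y = x * y'" by (auto simp: smul_set_def)
    moreover have "b * d * (x * y') = a * (d * y')" using ab by (simp add: field_simps)
    moreover have "a * (d * y') \<in> D" using d ab mult_in_D \<open>y' \<in> A\<close> by blast
    ultimately show ?thesis by metis
  qed
  obtain a0 where "a0 \<in> A" "a0 \<noteq> 0" using nz_frac_nonzero_elem[OF A] by auto
  then have "x * a0 \<in> smul_set x A" "x * a0 \<noteq> 0" using x0 by (auto simp: smul_set_def)
  then show ?thesis using nz_fracI[OF sxA _ _ bd] ab d mult_in_D by simp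
qed

lemma principal_nz_frac: "x \<noteq> 0 \<Longrightarrow> nz_frac D (principal_frac D x)"
  using smul_set_nz_frac[OF nz_frac_D] by (simp add: principal_frac_eq_smul_set)

lemma principal_frac_subset: "submod D R \<Longrightarrow> x \<in> R \<Longrightarrow> principal_frac D x \<subseteq> R"
  unfolding principal_frac_def using submod_mult by (fastforce simp: mult.commute)

lemma gen_submod: "submod D (gen D F)"
proof -
  have "a + b \<in> gen D F" if "a \<in> gen D F" "b \<in> gen D F" for a b
  proof -
    from that obtain c1 c2 where c: "\<forall>f\<in>F. c1 f \<in> D" "a = (\<Sum>f\<in>F. c1 f * f)"
      "\<forall>f\<in>F. c2 f \<in> D" "b = (\<Sum>f\<in>F. c2 f * f)" by (auto simp: gen_def)
    then have "a + b = (\<Sum>f\<in>F. (c1 f + c2 f) * f)" by (simp add: sum.distrib distrib_right)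
    then show ?thesis using c add_in_D unfolding gen_def by (intro CollectI exI[of _ "\<lambda>f. c1 f + c2 f"]) auto
  qed
  moreover have "d * a \<in> gen D F" if "d \<in> D" "a \<in> gen D F" for d a
  proof -
    from that obtain c where c: "\<forall>f\<in>F. c f \<in> D" "a = (\<Sum>f\<in>F. c f * f)" by (auto simp: gen_def)
    then have "d * a = (\<Sum>f\<in>F. (d * c f) * f)" by (simp add: sum_distrib_left mult.assoc)
    then show ?thesis using c that mult_in_D unfolding gen_def by (intro CollectI exI[of _ "\<lambda>f. d * c f"]) auto
  qed
  moreover have "0 \<in> gen D F"
    unfolding gen_def by (rule CollectI, rule exI[of _ "\<lambda>_. 0"]) (simp add: zero_in_D)
  ultimately show ?thesis unfolding submod_def by blast
qed

lemma gen_contains: assumes "finite F" "f \<in> F" shows "f \<in> gen D F"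
proof -
  have "(\<Sum>g\<in>F. (if g = f then 1 else 0) * g) = (\<Sum>g\<in>F. if g = f then g else 0)"
    by (rule sum.cong) auto
  also have "\<dots> = f" using assms by (simp add: sum.delta')
  finally have "(\<Sum>g\<in>F. (if g = f then 1 else 0) * g) = f" .
  then show ?thesis unfolding gen_def using zero_in_D one_in_D
    by (intro CollectI exI[of _ "\<lambda>g. if g = f then 1 else 0"]) auto
qed

lemma gen_subset: assumes "submod D I" "F \<subseteq> I" shows "gen D F \<subseteq> I"
  using assms by (auto simp: gen_def intro!: submod_sum submod_mult)

lemma gen_mono: "finite F' \<Longrightarrow> F \<subseteq> F' \<Longrightarrow> gen D F \<subseteq> gen D F'"
  using gen_subset[OF gen_submod] gen_contains by (metis subset_iff)

lemma gen_nz_frac: assumes "finite F" "gen D F \<noteq> {0}" shows "nz_frac D (gen D F)"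
proof -
  obtain d where d: "d \<in> D" "d \<noteq> 0" "\<forall>x\<in>F. d * x \<in> D" using common_denominator[OF assms(1)] by auto
  have "d * x \<in> D" if "x \<in> gen D F" for x
  proof -
    from that obtain c where c: "\<forall>f\<in>F. c f \<in> D" "x = (\<Sum>f\<in>F. c f * f)" by (auto simp: gen_def)
    then have "d * x = (\<Sum>f\<in>F. c f * (d * f))" by (simp add: sum_distrib_left mult.left_commute)
    then show ?thesis using c d by (auto intro!: sum_in_D intro: mult_in_D)
  qed
  then show ?thesis using d assms gen_submod unfolding nz_frac_def frac_ideal_def by auto
qed

lemma smul_gen_subset: assumes "submod D P" "\<forall>\<gamma>\<in>G. g * \<gamma> \<in> P" shows "smul_set g (gen D G) \<subseteq> P"
proof
  fix y assume "y \<in> smul_set g (gen D G)"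
  then obtain c where c: "\<forall>f\<in>G. c f \<in> D" "y = g * (\<Sum>f\<in>G. c f * f)" by (auto simp: smul_set_def gen_def)
  then have "y = (\<Sum>f\<in>G. c f * (g * f))" by (simp add: sum_distrib_left mult.left_commute)
  also have "\<dots> \<in> P"
    using assms c by (intro submod_sum[OF assms(1)]) (simp add: submod_mult)
  finally show "y \<in> P" .
qed

lemma ideal_add_submod: assumes A: "submod D A" and B: "submod D B" shows "submod D (ideal_add A B)"
proof -
  have "x + y \<in> ideal_add A B" if "x \<in> ideal_add A B" "y \<in> ideal_add A B" for x y
  proof -
    from that obtain a b a' b' where "a \<in> A" "b \<in> B" "a' \<in> A" "b' \<in> B" "x = a + b" "y = a' + b'"
      by (auto simp: ideal_add_def)
    moreover from this have "x + y = (a + a') + (b + b')" by (simp add: algebra_simps)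
    ultimately show ?thesis using submod_add[OF A] submod_add[OF B] unfolding ideal_add_def by blast
  qed
  moreover have "d * x \<in> ideal_add A B" if "d \<in> D" "x \<in> ideal_add A B" for d x
  proof -
    from that obtain a b where "a \<in> A" "b \<in> B" "x = a + b" by (auto simp: ideal_add_def)
    moreover from this have "d * x = d * a + d * b" by (simp add: algebra_simps)
    ultimately show ?thesis using submod_mult[OF A] submod_mult[OF B] that unfolding ideal_add_def by blast
  qed
  moreover have "0 \<in> ideal_add A B" using submod_0[OF A] submod_0[OF B] by (force simp: ideal_add_def)
  ultimately show ?thesis unfolding submod_def by blast
qed

lemma ideal_add_upper1: "submod D B \<Longrightarrow> A \<subseteq> ideal_add A B"
  and ideal_add_upper2: "submod D A \<Longrightarrow> B \<subseteq> ideal_add A B"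
  unfolding ideal_add_def using submod_0 by force+

lemma ideal_add_least: "submod D C \<Longrightarrow> A \<subseteq> C \<Longrightarrow> B \<subseteq> C \<Longrightarrow> ideal_add A B \<subseteq> C"
  unfolding ideal_add_def using submod_add by blast

lemma ideal_add_nz_frac: assumes A: "nz_frac D A" and B: "nz_frac D B" shows "nz_frac D (ideal_add A B)"
proof -
  have sA: "submod D A" and sB: "submod D B" using assms nz_frac_submod by auto
  obtain d1 where d1: "d1 \<in> D" "d1 \<noteq> 0" "\<And>x. x \<in> A \<Longrightarrow> d1 * x \<in> D"
    using nz_frac_denominator[OF A] by metis
  obtain d2 where d2: "d2 \<in> D" "d2 \<noteq> 0" "\<And>x. x \<in> B \<Longrightarrow> d2 * x \<in> D"
    using nz_frac_denominator[OF B] by metis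
  have "d1 * d2 * x \<in> D" if "x \<in> ideal_add A B" for x
  proof -
    from that obtain a b where "a \<in> A" "b \<in> B" "x = a + b" by (auto simp: ideal_add_def)
    moreover have "d1 * d2 * (a + b) = d2 * (d1 * a) + d1 * (d2 * b)" by (simp add: algebra_simps)
    ultimately show ?thesis using d1 d2 add_in_D mult_in_D by simp
  qed
  moreover obtain a where "a \<in> A" "a \<noteq> 0" using nz_frac_nonzero_elem[OF A] by auto
  ultimately show ?thesis using ideal_add_submod[OF sA sB] ideal_add_upper1[OF sB, of A] d1 d2 mult_in_D
    by (intro nz_fracI[of _ "d1 * d2" a]) auto
qed

lemma mult_in_ideal_mult: "a \<in> A \<Longrightarrow> b \<in> B \<Longrightarrow> a * b \<in> ideal_mult A B"
  unfolding ideal_mult_def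
  by (intro CollectI exI[of _ "1::nat"] exI[of _ "\<lambda>_. a"] exI[of _ "\<lambda>_. b"]) auto

lemma ideal_mult_least:
  assumes "submod D C" "\<And>a b. a \<in> A \<Longrightarrow> b \<in> B \<Longrightarrow> a * b \<in> C"
  shows "ideal_mult A B \<subseteq> C"
  using assms by (auto simp: ideal_mult_def intro!: submod_sum)

lemma ideal_mult_submod: assumes sA: "submod D A" shows "submod D (ideal_mult A B)"
proof -
  have "x + y \<in> ideal_mult A B" if xy: "x \<in> ideal_mult A B" "y \<in> ideal_mult A B" for x y
  proof -
    from xy obtain n m :: nat and f g f' g' where h: "\<forall>i<n. f i \<in> A \<and> g i \<in> B" "x = (\<Sum>i<n. f i * g i)"
      "\<forall>i<m. f' i \<in> A \<and> g' i \<in> B" "y = (\<Sum>i<m. f' i * g' i)" unfolding ideal_mult_def by blast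
    define F where "F i = (if i < n then f i else f' (i - n))" for i
    define G where "G i = (if i < n then g i else g' (i - n))" for i
    have "(\<Sum>i<n+m. F i * G i) = (\<Sum>i<n+m. if i < n then f i * g i else f' (i - n) * g' (i - n))"
      unfolding F_def G_def by (rule sum.cong) auto
    also have "\<dots> = x + y"
      using h sum_lessThan_add_if[where n=n and m=m and f="\<lambda>i. f i * g i" and g="\<lambda>i. f' i * g' i"] by simp
    finally show ?thesis using h unfolding ideal_mult_def F_def G_def
      by (intro CollectI exI[of _ "n + m"] exI[of _ F] exI[of _ G]) (auto simp: F_def G_def)
  qed
  moreover have "d * x \<in> ideal_mult A B" if "d \<in> D" "x \<in> ideal_mult A B" for d x
  proof -
    from that obtain n :: nat and f g where h: "\<forall>i<n. f i \<in> A \<and> g i \<in> B" "x = (\<Sum>i<n. f i * g i)"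
      unfolding ideal_mult_def by blast
    then have "d * x = (\<Sum>i<n. (d * f i) * g i)" by (simp add: sum_distrib_left mult.assoc)
    then show ?thesis using h submod_mult[OF sA \<open>d \<in> D\<close>] unfolding ideal_mult_def
      by (intro CollectI exI[of _ n] exI[of _ "\<lambda>i. d * f i"] exI[of _ g]) auto
  qed
  moreover have "0 \<in> ideal_mult A B"
    unfolding ideal_mult_def by (intro CollectI exI[of _ "0::nat"]) auto
  ultimately show ?thesis unfolding submod_def by blast
qed

lemma ideal_mult_nz_frac: assumes A: "nz_frac D A" and B: "nz_frac D B" shows "nz_frac D (ideal_mult A B)"
proof -
  obtain d1 where d1: "d1 \<in> D" "d1 \<noteq> 0" "\<And>x. x \<in> A \<Longrightarrow> d1 * x \<in> D"
    using nz_frac_denominator[OF A] by metis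
  obtain d2 where d2: "d2 \<in> D" "d2 \<noteq> 0" "\<And>x. x \<in> B \<Longrightarrow> d2 * x \<in> D"
    using nz_frac_denominator[OF B] by metis
  have "d1 * d2 * x \<in> D" if "x \<in> ideal_mult A B" for x
  proof -
    from that obtain n :: nat and f g where h: "\<forall>i<n. f i \<in> A \<and> g i \<in> B" "x = (\<Sum>i<n. f i * g i)"
      unfolding ideal_mult_def by blast
    then have "d1 * d2 * x = (\<Sum>i<n. (d1 * f i) * (d2 * g i))"
      by (simp add: sum_distrib_left algebra_simps)
    moreover have "d1 * f i * (d2 * g i) \<in> D" if "i < n" for i
      using h that d1(3) d2(3) mult_in_D by blast
    ultimately show ?thesis by (auto intro: sum_in_D)
  qed
  moreover obtain a b where "a \<in> A" "a \<noteq> 0" "b \<in> B" "b \<noteq> 0"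
    using nz_frac_nonzero_elem[OF A] nz_frac_nonzero_elem[OF B] by auto
  ultimately show ?thesis
    using ideal_mult_submod[OF nz_frac_submod[OF A]] mult_in_ideal_mult d1 d2 mult_in_D
    by (intro nz_fracI[of _ "d1 * d2" "a * b"]) auto
qed

lemma ideal_mult_subset_D: "submod D A \<Longrightarrow> A \<subseteq> D \<Longrightarrow> B \<subseteq> D \<Longrightarrow> ideal_mult A B \<subseteq> D"
  by (rule ideal_mult_least[OF submod_D]) (auto intro: mult_in_D)

lemma ideal_mult_subset_left: assumes "submod D A" "B \<subseteq> D" shows "ideal_mult A B \<subseteq> A"
proof (rule ideal_mult_least[OF assms(1)])
  fix a b assume "a \<in> A" "b \<in> B"
  then have "b * a \<in> A" using assms submod_mult by blast
  then show "a * b \<in> A" by (simp add: mult.commute)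
qed

lemma ideal_mult_subset_right: "submod D B \<Longrightarrow> A \<subseteq> D \<Longrightarrow> ideal_mult A B \<subseteq> B"
  by (rule ideal_mult_least) (auto intro: submod_mult)

lemma inv_ideal_submod: "submod D (inv_ideal D A)"
  unfolding submod_def inv_ideal_def
  by (auto simp: zero_in_D distrib_right mult.assoc intro: add_in_D mult_in_D)

lemma inv_ideal_nz_frac: assumes A: "nz_frac D A" shows "nz_frac D (inv_ideal D A)"
proof -
  obtain d where d: "d \<in> D" "d \<noteq> 0" "\<And>x. x \<in> A \<Longrightarrow> d * x \<in> D"
    using nz_frac_denominator[OF A] by metis
  then have dI: "d \<in> inv_ideal D A" by (simp add: inv_ideal_def)
  obtain a0 where a0: "a0 \<in> A" "a0 \<noteq> 0" using nz_frac_nonzero_elem[OF A] by auto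
  obtain p q where pq: "p \<in> D" "q \<in> D" "q \<noteq> 0" "a0 = p / q" by (rule fraction_of_D)
  have "p * h \<in> D" if "h \<in> inv_ideal D A" for h
  proof -
    have "h * a0 \<in> D" using that a0 by (simp add: inv_ideal_def)
    moreover have "p * h = (h * a0) * q" using pq by (simp add: field_simps)
    ultimately show ?thesis using pq mult_in_D by metis
  qed
  moreover have "p \<noteq> 0" using pq a0 by auto
  ultimately show ?thesis using nz_fracI[OF inv_ideal_submod] pq dI d by blast
qed

lemma ideal_mult_inv_subset_D: "ideal_mult A (inv_ideal D A) \<subseteq> D"
  by (rule ideal_mult_least[OF submod_D]) (auto simp: inv_ideal_def mult.commute)

lemma ideal_mult_not_subset:
  "submod D P \<Longrightarrow> \<not> ideal_mult A B \<subseteq> P \<Longrightarrow> \<exists>a\<in>A. \<exists>b\<in>B. a * b \<notin> P"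
  using ideal_mult_least[of P A B] by blast

lemma ideal_prod_nz_frac: "(\<forall>I\<in>set Is. nz_frac D I) \<Longrightarrow> nz_frac D (ideal_prod D Is)"
  by (induction Is) (auto simp: nz_frac_D intro: ideal_mult_nz_frac)

lemma ideal_prod_subset_D: "(\<forall>I\<in>set Is. I \<subseteq> D \<and> submod D I) \<Longrightarrow> ideal_prod D Is \<subseteq> D"
  by (induction Is) (simp_all add: ideal_mult_subset_D)

lemma ideal_prod_submod: "(\<forall>I\<in>set Is. submod D I) \<Longrightarrow> submod D (ideal_prod D Is)"
  by (induction Is) (auto simp: submod_D intro: ideal_mult_submod)

lemma prime_ideal_subset_D: "prime_ideal_in D P \<Longrightarrow> P \<subseteq> D"
  and prime_ideal_submod: "prime_ideal_in D P \<Longrightarrow> submod D P"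
  by (simp_all add: prime_ideal_in_def)

lemma prime_ideal_one: "prime_ideal_in D P \<Longrightarrow> 1 \<notin> P"
  unfolding prime_ideal_in_def using submod_eq_D_if_one by blast

lemma prime_ideal_0: "prime_ideal_in D P \<Longrightarrow> 0 \<in> P"
  using prime_ideal_submod submod_0 by blast

lemma prime_ideal_mult_notin:
  "prime_ideal_in D P \<Longrightarrow> s \<in> D \<Longrightarrow> t \<in> D \<Longrightarrow> s \<notin> P \<Longrightarrow> t \<notin> P \<Longrightarrow> s * t \<notin> P"
  unfolding prime_ideal_in_def by blast

lemma prime_ideal_power: "prime_ideal_in D P \<Longrightarrow> z \<in> D \<Longrightarrow> z ^ n \<in> P \<Longrightarrow> z \<in> P"
  by (induction n) (auto simp: prime_ideal_one power_in_D prime_ideal_in_def)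

lemma prime_ideal_inverse_notin:
  assumes "prime_ideal_in D R" "y \<in> R" "y \<noteq> 0" shows "inverse y \<notin> D"
  using assms prime_ideal_one submod_mult[OF prime_ideal_submod[OF assms(1)], of "inverse y" y] by force

lemma ideal_prod_subset_prime:
  assumes P: "prime_ideal_in D P" and Is: "\<forall>I\<in>set Is. I \<subseteq> D \<and> submod D I"
    and sub: "ideal_prod D Is \<subseteq> P"
  shows "\<exists>I\<in>set Is. I \<subseteq> P"
  using Is sub
proof (induction Is)
  case Nil then show ?case using prime_ideal_one[OF P] one_in_D by auto
next
  case (Cons I Is)
  show ?case
  proof (cases "I \<subseteq> P")
    case False
    then obtain i where i: "i \<in> I" "i \<notin> P" by auto
    have "r \<in> P" if r: "r \<in> ideal_prod D Is" for r
    proof -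
      have "i * r \<in> P" using mult_in_ideal_mult[OF i(1) r] Cons.prems by auto
      moreover have "i \<in> D" "r \<in> D" using i r Cons.prems ideal_prod_subset_D by auto
      ultimately show ?thesis using P i unfolding prime_ideal_in_def by blast
    qed
    then show ?thesis using Cons by auto
  qed simp
qed

lemma ideal_prod_not_subset_prime:
  assumes P: "prime_ideal_in D P" and Is: "\<forall>I\<in>set Is. I \<subseteq> D \<and> submod D I \<and> \<not> I \<subseteq> P"
  shows "\<exists>u\<in>ideal_prod D Is. u \<notin> P"
  using Is
proof (induction Is)
  case Nil then show ?case using one_in_D prime_ideal_one[OF P] by auto
next
  case (Cons I Is)
  then obtain u v where "u \<in> I" "u \<notin> P" "v \<in> ideal_prod D Is" "v \<notin> P" by auto
  moreover have "ideal_prod D Is \<subseteq> D" using ideal_prod_subset_D Cons.prems by auto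
  moreover have "u \<in> D" using Cons.prems \<open>u \<in> I\<close> by auto
  ultimately have "u * v \<notin> P" "u * v \<in> ideal_prod D (I # Is)"
    using prime_ideal_mult_notin[OF P] mult_in_ideal_mult by auto
  then show ?case by blast
qed

lemma localization_mem: "a \<in> D \<Longrightarrow> s \<in> D \<Longrightarrow> s \<notin> P \<Longrightarrow> a / s \<in> localization D P"
  unfolding localization_def by blast

lemma localizationE:
  "v \<in> localization D P \<Longrightarrow> (\<And>a s. a \<in> D \<Longrightarrow> s \<in> D \<Longrightarrow> s \<notin> P \<Longrightarrow> v = a / s \<Longrightarrow> thesis) \<Longrightarrow> thesis"
  unfolding localization_def by blast

lemma D_subset_localization: "1 \<notin> P \<Longrightarrow> D \<subseteq> localization D P"
  using localization_mem[OF _ one_in_D] by fastforce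

lemma localization_domain: assumes P: "prime_ideal_in D P" shows "is_domain_in (localization D P)"
proof -
  let ?V = "localization D P"
  have DV: "D \<subseteq> ?V" using D_subset_localization[OF prime_ideal_one[OF P]] .
  have "u + v \<in> ?V \<and> u - v \<in> ?V \<and> u * v \<in> ?V" if uv: "u \<in> ?V" "v \<in> ?V" for u v
  proof -
    obtain a s where as: "a \<in> D" "s \<in> D" "s \<notin> P" "u = a / s"
      using uv(1) by (rule localizationE)
    obtain b t where bt: "b \<in> D" "t \<in> D" "t \<notin> P" "v = b / t"
      using uv(2) by (rule localizationE)
    have "s \<noteq> 0" "t \<noteq> 0" using prime_ideal_0[OF P] as bt by auto
    then have "u + v = (a * t + b * s) / (s * t)" "u - v = (a * t - b * s) / (s * t)"
      "u * v = (a * b) / (s * t)" using as bt by (simp_all add: field_simps)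
    moreover have "s * t \<in> D" "s * t \<notin> P" using mult_in_D prime_ideal_mult_notin[OF P] as bt by auto
    moreover have "a * t + b * s \<in> D" "a * t - b * s \<in> D" "a * b \<in> D"
      using as bt mult_in_D add_in_D diff_in_D by auto
    ultimately show ?thesis using localization_mem by metis
  qed
  moreover have "\<forall>x. \<exists>a\<in>?V. \<exists>b\<in>?V. b \<noteq> 0 \<and> x = a / b"
    using domain DV unfolding is_domain_in_def by blast
  ultimately show ?thesis unfolding is_domain_in_def using DV zero_in_D one_in_D by blast
qed

lemma common_denominator_localization:
  assumes P: "prime_ideal_in D P" and "finite X" "X \<subseteq> localization D P"
  shows "\<exists>s\<in>D. s \<notin> P \<and> (\<forall>v\<in>X. s * v \<in> D)"
  using assms(2,3)
proof (induction X rule: finite_induct)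
  case empty then show ?case using one_in_D prime_ideal_one[OF P] by blast
next
  case (insert v X)
  then obtain s where s: "s \<in> D" "s \<notin> P" "\<forall>u\<in>X. s * u \<in> D" by auto
  obtain a t where at: "a \<in> D" "t \<in> D" "t \<notin> P" "v = a / t" using insert localizationE by blast
  have "t \<noteq> 0" using prime_ideal_0[OF P] at by auto
  then have "s * t * v = s * a" using at by simp
  moreover have "\<forall>u\<in>X. s * t * u \<in> D"
    using s at mult_in_D by (metis mult.assoc mult.commute)
  ultimately show ?case using s at mult_in_D prime_ideal_mult_notin[OF P] by (intro bexI[of _ "s * t"]) auto
qed

lemma localization_quotient_domain: "prime_ideal_in D P \<Longrightarrow> quotient_domain (localization D P)"
  by unfold_locales (rule localization_domain)

lemma localization_mult: "prime_ideal_in D P \<Longrightarrow> u \<in> localization D P \<Longrightarrow> v \<in> localization D P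
    \<Longrightarrow> u * v \<in> localization D P"
  using quotient_domain.mult_in_D[OF localization_quotient_domain] .

lemma localization_one: "prime_ideal_in D P \<Longrightarrow> 1 \<in> localization D P"
  using quotient_domain.one_in_D[OF localization_quotient_domain] .

lemma localization_inverse: "s \<in> D \<Longrightarrow> s \<notin> P \<Longrightarrow> inverse s \<in> localization D P"
  using localization_mem[OF one_in_D] by (simp add: divide_inverse)

lemma localize_mem: "a \<in> A \<Longrightarrow> s \<in> D \<Longrightarrow> s \<notin> M \<Longrightarrow> a / s \<in> localize D A M"
  unfolding localize_def by blast

lemma localizeE:
  "v \<in> localize D A M \<Longrightarrow> (\<And>a s. a \<in> A \<Longrightarrow> s \<in> D \<Longrightarrow> s \<notin> M \<Longrightarrow> v = a / s \<Longrightarrow> thesis) \<Longrightarrow> thesis"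
  unfolding localize_def by blast

lemma localize_mono: "A \<subseteq> B \<Longrightarrow> localize D A M \<subseteq> localize D B M"
  unfolding localize_def by blast

lemma subset_localize: "1 \<notin> M \<Longrightarrow> A \<subseteq> localize D A M"
  using localize_mem[OF _ one_in_D] by fastforce

lemma localize_D: "localize D D M = localization D M"
  by (simp add: localize_def localization_def)

lemma localize_localize_subset:
  assumes M: "prime_ideal_in D M" shows "localize D (localize D A M) M \<subseteq> localize D A M"
proof
  fix z assume "z \<in> localize D (localize D A M) M"
  then obtain u s where us: "u \<in> localize D A M" "s \<in> D" "s \<notin> M" "z = u / s" by (rule localizeE)
  then obtain a t where at: "a \<in> A" "t \<in> D" "t \<notin> M" "u = a / t" by (meson localizeE)
  have "a / (t * s) \<in> localize D A M"
    using localize_mem at us mult_in_D prime_ideal_mult_notin[OF M] by simp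
  then show "z \<in> localize D A M" using us at by simp
qed

lemma localize_eq_localization:
  assumes A: "submod D A" "A \<subseteq> D" and u: "u \<in> A" "u \<notin> M" and M: "prime_ideal_in D M"
  shows "localize D A M = localization D M"
proof
  show "localize D A M \<subseteq> localization D M" using localize_mono[OF A(2)] localize_D by blast
  show "localization D M \<subseteq> localize D A M"
  proof
    fix z assume "z \<in> localization D M"
    then obtain d s where ds: "d \<in> D" "s \<in> D" "s \<notin> M" "z = d / s" by (rule localizationE)
    have "u \<in> D" "u \<noteq> 0" using u A prime_ideal_0[OF M] by auto
    moreover have "s * u \<in> D" "s * u \<notin> M" using mult_in_D ds prime_ideal_mult_notin[OF M] u \<open>u \<in> D\<close> by auto
    ultimately have "(d * u) / (s * u) \<in> localize D A M"
      using localize_mem[OF submod_mult[OF A(1) ds(1) u(1)]] by blast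
    then show "z \<in> localize D A M" using ds \<open>u \<noteq> 0\<close> by simp
  qed
qed

lemma localize_principal_frac_eq_localization:
  assumes x: "x \<in> D" "x \<notin> M" and M: "prime_ideal_in D M"
  shows "localize D (principal_frac D x) M = localization D M"
proof (rule localize_eq_localization[OF _ _ _ x(2) M])
  have "x \<noteq> 0" using x prime_ideal_0[OF M] by auto
  then show "submod D (principal_frac D x)" using nz_frac_submod[OF principal_nz_frac] by blast
  show "principal_frac D x \<subseteq> D" using x(1) mult_in_D by (auto simp: principal_frac_def)
  show "x \<in> principal_frac D x" using one_in_D by (force simp: principal_frac_def)
qed

lemma localize_ideal_mult_left:
  assumes B: "submod D B" and A: "A \<subseteq> D" and u: "u \<in> A" "u \<notin> M" and M: "prime_ideal_in D M"
  shows "localize D (ideal_mult A B) M = localize D B M"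
proof
  show "localize D (ideal_mult A B) M \<subseteq> localize D B M"
    using localize_mono[OF ideal_mult_subset_right[OF B A]] .
  show "localize D B M \<subseteq> localize D (ideal_mult A B) M"
  proof
    fix z assume "z \<in> localize D B M"
    then obtain b s where bs: "b \<in> B" "s \<in> D" "s \<notin> M" "z = b / s" by (rule localizeE)
    have "u \<in> D" "u \<noteq> 0" using u A prime_ideal_0[OF M] by auto
    moreover have "u * s \<in> D" "u * s \<notin> M" using mult_in_D bs prime_ideal_mult_notin[OF M] u \<open>u \<in> D\<close> by auto
    ultimately have "(u * b) / (u * s) \<in> localize D (ideal_mult A B) M"
      using localize_mem[OF mult_in_ideal_mult[OF u(1) bs(1)]] by blast
    then show "z \<in> localize D (ideal_mult A B) M" using bs \<open>u \<noteq> 0\<close> by simp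
  qed
qed

lemma localize_ideal_mult_right:
  assumes A: "submod D A" and B: "B \<subseteq> D" and v: "v \<in> B" "v \<notin> M" and M: "prime_ideal_in D M"
  shows "localize D (ideal_mult A B) M = localize D A M"
proof
  show "localize D (ideal_mult A B) M \<subseteq> localize D A M"
    using localize_mono[OF ideal_mult_subset_left[OF A B]] .
  show "localize D A M \<subseteq> localize D (ideal_mult A B) M"
  proof
    fix z assume "z \<in> localize D A M"
    then obtain a s where as: "a \<in> A" "s \<in> D" "s \<notin> M" "z = a / s" by (rule localizeE)
    have "v \<in> D" "v \<noteq> 0" using v B prime_ideal_0[OF M] by auto
    moreover have "s * v \<in> D" "s * v \<notin> M" using mult_in_D as prime_ideal_mult_notin[OF M] v \<open>v \<in> D\<close> by auto
    ultimately have "(a * v) / (s * v) \<in> localize D (ideal_mult A B) M"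
      using localize_mem[OF mult_in_ideal_mult[OF as(1) v(1)]] by blast
    then show "z \<in> localize D (ideal_mult A B) M" using as \<open>v \<noteq> 0\<close> by simp
  qed
qed

lemma localize_principal_frac: "localize D (principal_frac D x) M = principal_frac (localization D M) x"
proof
  show "localize D (principal_frac D x) M \<subseteq> principal_frac (localization D M) x"
  proof
    fix z assume "z \<in> localize D (principal_frac D x) M"
    then obtain d s where "d \<in> D" "s \<in> D" "s \<notin> M" "z = x * (d / s)"
      by (auto simp: principal_frac_def elim!: localizeE)
    then show "z \<in> principal_frac (localization D M) x"
      unfolding principal_frac_def using localization_mem by blast
  qed
  show "principal_frac (localization D M) x \<subseteq> localize D (principal_frac D x) M"
  proof
    fix z assume "z \<in> principal_frac (localization D M) x"
    then obtain a s where "a \<in> D" "s \<in> D" "s \<notin> M" "z = (x * a) / s"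
      by (auto simp: principal_frac_def elim!: localizationE)
    then show "z \<in> localize D (principal_frac D x) M"
      using localize_mem[of "x * a" "principal_frac D x"] by (auto simp: principal_frac_def)
  qed
qed

lemma principal_component_iff:
  "u \<in> principal_component D x P \<longleftrightarrow> u \<in> D \<and> (\<exists>v\<in>localization D P. u = x * v)"
  unfolding principal_component_def principal_frac_def by auto

lemma principal_component_subset_D: "principal_component D x P \<subseteq> D"
  by (simp add: principal_component_def)

lemma principal_component_submod:
  assumes P: "prime_ideal_in D P" shows "submod D (principal_component D x P)"
proof -
  interpret V: quotient_domain "localization D P" using localization_quotient_domain[OF P] .
  have DV: "D \<subseteq> localization D P" using D_subset_localization[OF prime_ideal_one[OF P]] .
  have "a + b \<in> principal_component D x P"
    if "a \<in> principal_component D x P" "b \<in> principal_component D x P" for a b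
  proof -
    from that obtain v w where "a \<in> D" "b \<in> D" "v \<in> localization D P" "w \<in> localization D P"
      "a = x * v" "b = x * w" unfolding principal_component_iff by blast
    moreover from this have "a + b = x * (v + w)" by (simp add: algebra_simps)
    ultimately show ?thesis unfolding principal_component_iff using add_in_D V.add_in_D by blast
  qed
  moreover have "d * a \<in> principal_component D x P" if "d \<in> D" "a \<in> principal_component D x P" for d a
  proof -
    from that obtain v where "a \<in> D" "v \<in> localization D P" "a = x * v"
      unfolding principal_component_iff by blast
    moreover from this have "d * a = x * (d * v)" by (simp add: mult_ac)
    ultimately show ?thesis unfolding principal_component_iff using that mult_in_D V.mult_in_D DV by blast
  qed
  moreover have "0 \<in> principal_component D x P"
    unfolding principal_component_iff using zero_in_D V.zero_in_D by force
  ultimately show ?thesis unfolding submod_def by blast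
qed

lemma valuation_domain_divides_finite:
  assumes V: "valuation_domain_in D" and "finite F" "\<exists>f\<in>F. f \<noteq> 0"
  shows "\<exists>\<gamma>0\<in>F. \<gamma>0 \<noteq> 0 \<and> (\<forall>\<gamma>\<in>F. \<gamma> / \<gamma>0 \<in> D)"
  using assms(2,3)
proof (induction F rule: finite_induct)
  case (insert a F)
  show ?case
  proof (cases "\<exists>f\<in>F. f \<noteq> 0")
    case False
    then show ?thesis using insert zero_in_D one_in_D by (intro bexI[of _ a]) auto
  next
    case True
    then obtain g where g: "g \<in> F" "g \<noteq> 0" "\<forall>\<gamma>\<in>F. \<gamma> / g \<in> D" using insert by blast
    show ?thesis
    proof (cases "a / g \<in> D")
      case True then show ?thesis using g by auto
    next
      case False
      then have a0: "a \<noteq> 0" using zero_in_D by auto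
      then have "a / g \<noteq> 0" using g(2) by simp
      then have "inverse (a / g) \<in> D" using V False unfolding valuation_domain_in_def by blast
      then have ga: "g / a \<in> D" by simp
      have "\<gamma> / a \<in> D" if "\<gamma> \<in> F" for \<gamma>
      proof -
        have "\<gamma> / a = (\<gamma> / g) * (g / a)" using g(2) by simp
        moreover have "(\<gamma> / g) * (g / a) \<in> D" using g(3) that ga mult_in_D by blast
        ultimately show ?thesis by metis
      qed
      then show ?thesis using a0 one_in_D by (intro bexI[of _ a]) auto
    qed
  qed
qed simp

lemma power_add_in_principal:
  assumes "d \<in> D" "e \<in> D" "v \<in> D" "u \<in> D" "d ^ n = x * v" "e ^ m = x * u"
  shows "\<exists>w\<in>D. (d + e) ^ (n + m) = x * w"
proof -
  define N where "N = n + m"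
  text \<open>Each term of the binomial expansion has \<open>d\<close> to a power \<open>\<ge> n\<close> or \<open>e\<close> to a power \<open>\<ge> m\<close>.\<close>
  define t where "t k = (if n \<le> k then of_nat (N choose k) * (v * d ^ (k - n)) * e ^ (N - k)
                         else of_nat (N choose k) * d ^ k * (u * e ^ (N - k - m)))" for k
  have binomial_term: "of_nat (N choose k) * d ^ k * e ^ (N - k) = x * t k" for k
  proof (cases "n \<le> k")
    case True
    then have "d ^ k = d ^ n * d ^ (k - n)" by (metis le_add_diff_inverse power_add)
    then show ?thesis using True assms(5) by (simp add: t_def mult_ac)
  next
    case False
      then have "N - k = m + (N - k - m)" by (simp add: N_def)
    then have "e ^ (N - k) = e ^ m * e ^ (N - k - m)" by (metis power_add)
    then show ?thesis using False assms(6) by (simp add: t_def mult_ac)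
  qed
  have "(d + e) ^ N = (\<Sum>k\<le>N. x * t k)" by (simp add: binomial_ring binomial_term)
  also have "\<dots> = x * (\<Sum>k\<le>N. t k)" by (simp add: sum_distrib_left)
  finally have "(d + e) ^ N = x * (\<Sum>k\<le>N. t k)" .
  moreover have "t k \<in> D" for k
    using assms(1-4) by (simp add: t_def mult_in_D of_nat_in_D power_in_D)
  ultimately show ?thesis unfolding N_def by (blast intro: sum_in_D)
qed

lemma valuation_power_mult_in_principal:
  assumes V: "valuation_domain_in D" and ab: "a \<in> D" "b \<in> D" "a \<noteq> 0" "b \<noteq> 0"
    and v: "v \<in> D" "(a * b) ^ n = x * v"
  shows "(\<exists>w\<in>D. a ^ (n + n) = x * w) \<or> (\<exists>w\<in>D. b ^ (n + n) = x * w)"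
proof -
  have "a ^ n / b ^ n \<noteq> 0" using ab by simp
  then have "a ^ n / b ^ n \<in> D \<or> b ^ n / a ^ n \<in> D"
    using V unfolding valuation_domain_in_def by (metis inverse_divide)
  moreover have "a ^ (n + n) = x * (v * (a ^ n / b ^ n))" "b ^ (n + n) = x * (v * (b ^ n / a ^ n))"
    using ab v by (simp_all add: power_add power_mult_distrib field_simps)
  ultimately show ?thesis using v mult_in_D by blast
qed

lemma radical_principal_localization_subset:
  assumes P: "prime_ideal_in D P" and x: "x \<in> P"
    and d: "d \<in> D" "v \<in> localization D P" "d ^ n = x * v"
  shows "d \<in> P"
proof -
  obtain a s where as: "a \<in> D" "s \<in> D" "s \<notin> P" "v = a / s" using d(2) by (rule localizationE)
  have "s \<noteq> 0" using as prime_ideal_0[OF P] by auto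
  then have "s * d ^ n = a * x" using d(3) as by simp
  then have "s * d ^ n \<in> P" using submod_mult[OF prime_ideal_submod[OF P] as(1) x] by simp
  then show "d \<in> P"
    using prime_ideal_power[OF P d(1)] as prime_ideal_mult_notin[OF P] power_in_D[OF d(1)] by blast
qed

lemma radical_principal_localization_prime:
  assumes P: "prime_ideal_in D P" and V: "valuation_domain_in (localization D P)" and x: "x \<in> P"
  defines "R \<equiv> {d \<in> D. \<exists>n\<ge>1. \<exists>v\<in>localization D P. d ^ n = x * v}"
  shows "prime_ideal_in D R" "R \<subseteq> P" "x \<in> R"
proof -
  let ?V = "localization D P"
  interpret V: quotient_domain ?V using localization_quotient_domain[OF P] .
  have DV: "D \<subseteq> ?V" using D_subset_localization[OF prime_ideal_one[OF P]] .
  have xD: "x \<in> D" using x prime_ideal_subset_D[OF P] by blast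
  show "R \<subseteq> P" using radical_principal_localization_subset[OF P x] unfolding R_def by blast
  show "x \<in> R" unfolding R_def using xD V.one_in_D by (intro CollectI conjI exI[of _ 1] bexI[of _ 1]) auto
  have "d + e \<in> R" if de: "d \<in> R" "e \<in> R" for d e
  proof -
    from de obtain n v m u where nm: "d \<in> D" "n \<ge> 1" "v \<in> ?V" "d ^ n = x * v"
      "e \<in> D" "m \<ge> 1" "u \<in> ?V" "e ^ m = x * u"
      by (auto simp: R_def)
    then obtain w where "w \<in> ?V" "(d + e) ^ (n + m) = x * w"
      using V.power_add_in_principal[of d e v u n x m] DV by blast
    moreover have "n + m \<ge> 1" "d + e \<in> D" using nm add_in_D by auto
    ultimately show ?thesis unfolding R_def by blast
  qed
  moreover have "c * d \<in> R" if cd: "c \<in> D" "d \<in> R" for c d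
  proof -
    from cd obtain n v where "d \<in> D" "n \<ge> 1" "v \<in> ?V" "d ^ n = x * v" by (auto simp: R_def)
    moreover have "(c * d) ^ n = x * (c ^ n * v)" using calculation by (simp add: power_mult_distrib mult_ac)
    ultimately show ?thesis
      using cd V.mult_in_D DV power_in_D mult_in_D unfolding R_def by blast
  qed
  moreover have "0 \<in> R" unfolding R_def using zero_in_D V.zero_in_D
    by (intro CollectI conjI exI[of _ 1] bexI[of _ 0]) auto
  moreover have "a \<in> R \<or> b \<in> R" if ab: "a \<in> D" "b \<in> D" "a * b \<in> R" for a b
  proof (cases "a = 0 \<or> b = 0")
    case False
    obtain n v where n: "n \<ge> 1" "v \<in> ?V" "(a * b) ^ n = x * v" using ab by (auto simp: R_def)
    have "a \<in> ?V" "b \<in> ?V" using ab DV by auto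
    then have "(\<exists>w\<in>?V. a ^ (n + n) = x * w) \<or> (\<exists>w\<in>?V. b ^ (n + n) = x * w)"
      using V.valuation_power_mult_in_principal[OF V, of a b v n x] False n by blast
    moreover have "n + n \<ge> 1" using n by simp
    ultimately show ?thesis using ab unfolding R_def by blast
  qed (use \<open>0 \<in> R\<close> in auto)
  ultimately show "prime_ideal_in D R"
    using \<open>R \<subseteq> P\<close> prime_ideal_one[OF P] one_in_D
    unfolding prime_ideal_in_def submod_def by (auto simp: R_def)
qed

end

subsection \<open>Star operations and maximal star ideals\<close>

locale star_domain = quotient_domain +
  fixes st :: "'a::field set \<Rightarrow> 'a set"
  assumes star_op: "star_op D st"
begin

lemma st_nz_frac: "nz_frac D A \<Longrightarrow> nz_frac D (st A)"
  and st_principal: "x \<noteq> 0 \<Longrightarrow> st (principal_frac D x) = principal_frac D x"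
  and st_smul_set: "x \<noteq> 0 \<Longrightarrow> nz_frac D A \<Longrightarrow> st (smul_set x A) = smul_set x (st A)"
  and st_mono: "nz_frac D A \<Longrightarrow> nz_frac D B \<Longrightarrow> A \<subseteq> B \<Longrightarrow> st A \<subseteq> st B"
  and st_extensive: "nz_frac D A \<Longrightarrow> A \<subseteq> st A"
  and st_idem: "nz_frac D A \<Longrightarrow> st (st A) = st A"
  using star_op by (simp_all add: star_op_def)

lemma st_D: "st D = D"
  using st_principal[of 1] principal_frac_one by simp

lemma star_ideal_D: "star_ideal D st D"
  by (simp add: star_ideal_def st_D nz_frac_D)

lemma st_least: "nz_frac D A \<Longrightarrow> star_ideal D st B \<Longrightarrow> A \<subseteq> B \<Longrightarrow> st A \<subseteq> B"
  using st_mono unfolding star_ideal_def by fastforce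

lemma st_subset_D: "nz_frac D A \<Longrightarrow> A \<subseteq> D \<Longrightarrow> st A \<subseteq> D"
  using st_least[OF _ star_ideal_D] .

lemma st_eq_D_if_one: assumes "nz_frac D A" "A \<subseteq> D" "1 \<in> st A" shows "st A = D"
  using submod_eq_D_if_one[OF nz_frac_submod[OF st_nz_frac[OF assms(1)]] st_subset_D[OF assms(1,2)] assms(3)] .

lemma star_ideal_st: "nz_frac D A \<Longrightarrow> star_ideal D st (st A)"
  by (simp add: star_ideal_def st_nz_frac st_idem)

lemma star_ideal_principal: "x \<noteq> 0 \<Longrightarrow> star_ideal D st (principal_frac D x)"
  by (simp add: star_ideal_def st_principal principal_nz_frac)

lemma star_idealI: "nz_frac D A \<Longrightarrow> st A \<subseteq> A \<Longrightarrow> star_ideal D st A"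
  using st_extensive by (auto simp: star_ideal_def)

lemma finite_type_st_gen: "finite F \<Longrightarrow> gen D F \<noteq> {0} \<Longrightarrow> finite_type D st (st (gen D F))"
  unfolding finite_type_def fin_gen_nz_def using star_ideal_st gen_nz_frac by blast

lemma st_smul_set_subset:
  assumes "nz_frac D A" "h \<noteq> 0" "star_ideal D st B" "smul_set h A \<subseteq> B"
  shows "smul_set h (st A) \<subseteq> B"
  using st_least[OF smul_set_nz_frac[OF assms(1,2)] assms(3,4)] st_smul_set[OF assms(2,1)] by simp

lemma inv_ideal_st: assumes A: "nz_frac D A" shows "inv_ideal D (st A) = inv_ideal D A"
proof
  show "inv_ideal D (st A) \<subseteq> inv_ideal D A" using st_extensive[OF A] by (auto simp: inv_ideal_def)
  show "inv_ideal D A \<subseteq> inv_ideal D (st A)"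
  proof
    fix h assume h: "h \<in> inv_ideal D A"
    show "h \<in> inv_ideal D (st A)"
    proof (cases "h = 0")
      case False
      have "smul_set h A \<subseteq> D" using h by (auto simp: inv_ideal_def smul_set_def mult.commute)
      then have "smul_set h (st A) \<subseteq> D" using st_smul_set_subset[OF A False star_ideal_D] by blast
      then show ?thesis by (auto simp: inv_ideal_def smul_set_def mult.commute)
    qed (simp add: inv_ideal_def zero_in_D)
  qed
qed

lemma max_starD:
  assumes "max_star D st P"
  shows "star_ideal D st P" "nz_frac D P" "submod D P" "P \<subseteq> D" "1 \<notin> P" "0 \<in> P"
  using assms submod_eq_D_if_one unfolding max_star_def star_ideal_def
  by (auto dest: nz_frac_submod intro: submod_0 nz_frac_submod)

lemma max_star_maximal:
  "max_star D st P \<Longrightarrow> star_ideal D st J \<Longrightarrow> J \<subseteq> D \<Longrightarrow> J \<noteq> D \<Longrightarrow> P \<subseteq> J \<Longrightarrow> J = P"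
  unfolding max_star_def by blast

lemma max_star_eq_if_subset: "max_star D st P \<Longrightarrow> max_star D st Q \<Longrightarrow> P \<subseteq> Q \<Longrightarrow> P = Q"
  using max_star_maximal[of P Q] max_starD[of Q] one_in_D by blast

lemma st_eq_D_if_not_subset:
  assumes P: "max_star D st P" and A: "nz_frac D A" "A \<subseteq> D" "P \<subseteq> A" "\<not> A \<subseteq> P"
  shows "st A = D"
  using max_star_maximal[OF P star_ideal_st[OF A(1)] st_subset_D[OF A(1,2)]] st_extensive[OF A(1)] A(3,4)
  by blast

lemma max_star_prime: assumes P: "max_star D st P" shows "prime_ideal_in D P"
proof -
  note P' = max_starD[OF P]
  have "a \<in> P \<or> b \<in> P" if ab: "a \<in> D" "b \<in> D" "a * b \<in> P" for a b
  proof (rule ccontr)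
    assume "\<not> (a \<in> P \<or> b \<in> P)"
    then have a: "a \<notin> P" "a \<noteq> 0" and b: "b \<notin> P" "b \<noteq> 0" using P' by auto
    define S where "S = ideal_add P (principal_frac D a)"
    have pa: "nz_frac D (principal_frac D a)" "a \<in> principal_frac D a" "principal_frac D a \<subseteq> D"
      using principal_nz_frac[OF a(2)] ab(1) one_in_D mult_in_D
      by (auto simp: principal_frac_def intro!: image_eqI[of _ _ 1])
    have S: "nz_frac D S" "S \<subseteq> D" "P \<subseteq> S" "a \<in> S"
      unfolding S_def using ideal_add_nz_frac[OF P'(2) pa(1)] ideal_add_least[OF submod_D P'(4) pa(3)]
        ideal_add_upper1[OF nz_frac_submod[OF pa(1)], of P]
        ideal_add_upper2[OF P'(3), of "principal_frac D a"] pa(2) by auto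
    have "st S = D" using st_eq_D_if_not_subset[OF P S(1,2,3)] S(4) a(1) by blast
    text \<open>\<open>b S \<subseteq> P\<close> since \<open>a b \<in> P\<close>, hence \<open>b = b \<cdot> 1 \<in> b S\<^sup>\<star> \<subseteq> P\<close>.\<close>
    have "smul_set b S \<subseteq> P"
    proof
      fix y assume "y \<in> smul_set b S"
      then obtain p d where pd: "p \<in> P" "d \<in> D" "y = b * (p + a * d)"
        unfolding S_def smul_set_def ideal_add_def principal_frac_def by auto
      then have "y = b * p + d * (a * b)" by (simp add: algebra_simps)
      moreover have "b * p \<in> P" "d * (a * b) \<in> P" using submod_mult[OF P'(3)] pd ab by auto
      ultimately show "y \<in> P" using submod_add[OF P'(3)] by simp
    qed
    then have "smul_set b (st S) \<subseteq> P" using st_smul_set_subset[OF S(1) b(2) P'(1)] by blast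
    then show False using \<open>st S = D\<close> one_in_D b(1) by (force simp: smul_set_def)
  qed
  then show ?thesis using P' max_star_def P unfolding prime_ideal_in_def by blast
qed

end

locale star_domain_fc = star_domain +
  assumes finite_char: "finite_character D st"
begin

lemma st_finite_character:
  assumes "nz_frac D A" "y \<in> st A"
  obtains F where "finite F" "gen D F \<noteq> {0}" "gen D F \<subseteq> A" "y \<in> st (gen D F)"
proof -
  have "y \<in> \<Union>{st J |J. fin_gen_nz D J \<and> J \<subseteq> A}"
    using assms finite_char unfolding finite_character_def by simp
  then obtain J where "fin_gen_nz D J" "J \<subseteq> A" "y \<in> st J" by blast
  then show thesis using that unfolding fin_gen_nz_def by blast
qed

lemma star_ideal_Union_chain:
  assumes C: "C \<noteq> {}" "subset.chain {J. star_ideal D st J \<and> J \<subseteq> D \<and> 1 \<notin> J} C"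
  shows "star_ideal D st (\<Union>C) \<and> \<Union>C \<subseteq> D \<and> 1 \<notin> \<Union>C"
proof -
  have memC: "star_ideal D st X" "X \<subseteq> D" "1 \<notin> X" if "X \<in> C" for X
    using C(2) that unfolding subset_chain_def by blast+
  have smC: "submod D X" if "X \<in> C" for X
    using memC(1)[OF that] nz_frac_submod unfolding star_ideal_def by blast
  have ch: "\<forall>X\<in>C. \<forall>Y\<in>C. X \<subseteq> Y \<or> Y \<subseteq> X" using C(2) by (simp add: subset_chain_def)
  have "submod D (\<Union>C)" using submod_Union_chain[OF C(1) smC ch] .
  moreover have "\<Union>C \<noteq> {0}"
  proof -
    obtain X where "X \<in> C" using C(1) by blast
    then obtain a where "a \<in> X" "a \<noteq> 0"
      using memC(1) nz_frac_nonzero_elem unfolding star_ideal_def by blast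
    then show ?thesis using \<open>X \<in> C\<close> by blast
  qed
  moreover have "\<Union>C \<subseteq> D" using memC(2) by blast
  ultimately have nzU: "nz_frac D (\<Union>C)" using nz_frac_if_integral by blast
  have "st (\<Union>C) \<subseteq> \<Union>C"
  proof
    fix y assume "y \<in> st (\<Union>C)"
    then obtain F where F: "finite F" "gen D F \<noteq> {0}" "gen D F \<subseteq> \<Union>C" "y \<in> st (gen D F)"
      using st_finite_character[OF nzU] by blast
    text \<open>The finitely many generators already lie in one member of the chain.\<close>
    have "F \<subseteq> \<Union>C" using F(3) gen_contains[OF F(1)] by blast
    then obtain X where X: "X \<in> C" "F \<subseteq> X" using finite_subset_Union_chain[OF F(1) _ C] by blast
    have "st (gen D F) \<subseteq> X"
      using st_least[OF gen_nz_frac[OF F(1,2)] memC(1)[OF X(1)] gen_subset[OF smC[OF X(1)] X(2)]] .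
    then show "y \<in> \<Union>C" using F X by blast
  qed
  then show ?thesis using nzU \<open>\<Union>C \<subseteq> D\<close> memC(3) star_idealI by simp
qed

lemma exists_max_star:
  assumes H: "star_ideal D st H" "H \<subseteq> D" "H \<noteq> D"
  shows "\<exists>P. max_star D st P \<and> H \<subseteq> P"
proof -
  have one_iff: "1 \<notin> J \<longleftrightarrow> J \<noteq> D" if "star_ideal D st J" "J \<subseteq> D" for J
    using that submod_eq_D_if_one[of J] nz_frac_submod one_in_D unfolding star_ideal_def by blast
  define \<A> where "\<A> = {J. star_ideal D st J \<and> J \<subseteq> D \<and> 1 \<notin> J \<and> H \<subseteq> J}"
  have "H \<in> \<A>" using H one_iff[OF H(1,2)] unfolding \<A>_def by blast
  moreover have "\<Union>\<C> \<in> \<A>" if C: "\<C> \<noteq> {}" "subset.chain \<A> \<C>" for \<C>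
  proof -
    have "subset.chain {J. star_ideal D st J \<and> J \<subseteq> D \<and> 1 \<notin> J} \<C>"
      using C(2) unfolding subset_chain_def \<A>_def by blast
    moreover have "H \<subseteq> \<Union>\<C>" using C unfolding subset_chain_def \<A>_def by blast
    ultimately show ?thesis using star_ideal_Union_chain[OF C(1)] unfolding \<A>_def by blast
  qed
  ultimately obtain M where M: "M \<in> \<A>" "\<forall>X\<in>\<A>. M \<subseteq> X \<longrightarrow> X = M"
    using subset_Zorn_nonempty[of \<A>] by blast
  have "J = M" if "star_ideal D st J" "J \<subseteq> D" "J \<noteq> D" "M \<subseteq> J" for J
    using M that one_iff[OF that(1,2)] unfolding \<A>_def by blast
  then have "max_star D st M" using M(1) one_iff one_in_D unfolding max_star_def \<A>_def by blast
  then show ?thesis using M(1) unfolding \<A>_def by blast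
qed

subsection \<open>Homogeneous ideals and the local-global principle\<close>

lemma st_ideal_add_max_star:
  assumes P: "max_star D st P" and Q: "max_star D st Q" and PQ: "P \<noteq> Q"
  shows "st (ideal_add P Q) = D"
proof -
  note P' = max_starD[OF P] and Q' = max_starD[OF Q]
  have "\<not> ideal_add P Q \<subseteq> P"
    using ideal_add_upper2[OF P'(3), of Q] max_star_eq_if_subset[OF Q P] PQ by blast
  moreover have "P \<subseteq> ideal_add P Q" using ideal_add_upper1[OF Q'(3)] .
  ultimately show ?thesis using st_eq_D_if_not_subset[OF P ideal_add_nz_frac[OF P'(2) Q'(2)]
      ideal_add_least[OF submod_D P'(4) Q'(4)]] by blast
qed

lemma finite_type_enlarge:
  assumes F0: "finite F0" "gen D F0 \<noteq> {0}" and P: "star_ideal D st P" "st (gen D F0) \<subseteq> P"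
    and G: "finite G" "G \<subseteq> P"
  shows "finite_type D st (st (gen D (F0 \<union> G)))" "st (gen D F0) \<subseteq> st (gen D (F0 \<union> G))"
    "st (gen D (F0 \<union> G)) \<subseteq> P" "G \<subseteq> st (gen D (F0 \<union> G))"
proof -
  have fin: "finite (F0 \<union> G)" using F0(1) G(1) by simp
  have nz0: "nz_frac D (gen D F0)" using gen_nz_frac[OF F0] .
  have sub: "gen D F0 \<subseteq> gen D (F0 \<union> G)" using gen_mono[OF fin] by simp
  then have ne: "gen D (F0 \<union> G) \<noteq> {0}" using F0(2) submod_0[OF gen_submod] by blast
  have nz: "nz_frac D (gen D (F0 \<union> G))" using gen_nz_frac[OF fin ne] .
  show "finite_type D st (st (gen D (F0 \<union> G)))" using finite_type_st_gen[OF fin ne] .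
  show "st (gen D F0) \<subseteq> st (gen D (F0 \<union> G))" using st_mono[OF nz0 nz sub] .
  have smP: "submod D P" using P(1) nz_frac_submod unfolding star_ideal_def by blast
  have "F0 \<subseteq> P" using gen_contains[OF F0(1)] st_extensive[OF nz0] P(2) by blast
  then have "gen D (F0 \<union> G) \<subseteq> P" using gen_subset[OF smP] G(2) by simp
  then show "st (gen D (F0 \<union> G)) \<subseteq> P" using st_least[OF nz P(1)] by simp
  have "G \<subseteq> gen D (F0 \<union> G)" using gen_contains[OF fin] by blast
  then show "G \<subseteq> st (gen D (F0 \<union> G))" using st_extensive[OF nz] by blast
qed

lemma star_homogD:
  assumes "star_homog D st I"
  shows "I \<subseteq> D" "star_ideal D st I" "nz_frac D I" "submod D I"
    "\<exists>F. finite F \<and> gen D F \<noteq> {0} \<and> I = st (gen D F)"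
  using assms unfolding star_homog_def finite_type_def star_ideal_def fin_gen_nz_def
  by (auto intro: nz_frac_submod)

lemma star_homog_unique_max_star:
  assumes I: "star_homog D st I" and P: "max_star D st P" and Q: "max_star D st Q"
    and IP: "I \<subseteq> P" and IQ: "I \<subseteq> Q"
  shows "P = Q"
proof (rule ccontr)
  assume PQ: "P \<noteq> Q"
  note P' = max_starD[OF P] and Q' = max_starD[OF Q]
  have nzPQ: "nz_frac D (ideal_add P Q)" using ideal_add_nz_frac[OF P'(2) Q'(2)] .
  have "1 \<in> st (ideal_add P Q)" using st_ideal_add_max_star[OF P Q PQ] one_in_D by simp
  then obtain G where G: "finite G" "gen D G \<noteq> {0}" "gen D G \<subseteq> ideal_add P Q" "1 \<in> st (gen D G)"
    using st_finite_character[OF nzPQ] by blast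
  text \<open>Split every generator as \<open>p + q\<close> and enlarge \<open>I\<close> by the \<open>p\<close>'s inside \<open>P\<close>, by the \<open>q\<close>'s
    inside \<open>Q\<close>: the two resulting finite type ideals are comaximal, contradicting homogeneity.\<close>
  have "G \<subseteq> ideal_add P Q" using G(3) gen_contains[OF G(1)] by blast
  then obtain p q where pq: "\<And>g. g \<in> G \<Longrightarrow> p g \<in> P \<and> q g \<in> Q \<and> g = p g + q g"
    by (rule ideal_add_decompose) blast
  obtain F0 where F0: "finite F0" "gen D F0 \<noteq> {0}" "I = st (gen D F0)" using star_homogD(5)[OF I] by blast
  define A where "A = st (gen D (F0 \<union> p ` G))"
  define B where "B = st (gen D (F0 \<union> q ` G))"
  have "finite (p ` G)" "p ` G \<subseteq> P" "finite (q ` G)" "q ` G \<subseteq> Q" using G(1) pq by auto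
  then have A: "finite_type D st A" "I \<subseteq> A" "A \<subseteq> P" "p ` G \<subseteq> A"
    and B: "finite_type D st B" "I \<subseteq> B" "B \<subseteq> Q" "q ` G \<subseteq> B"
    using finite_type_enlarge[OF F0(1,2) P'(1)] finite_type_enlarge[OF F0(1,2) Q'(1)] IP IQ
    unfolding A_def B_def F0(3) by simp_all
  have "A \<subseteq> D" "A \<noteq> D" "B \<subseteq> D" "B \<noteq> D" using A(3) B(3) P'(4,5) Q'(4,5) one_in_D by auto
  then have ne: "st (ideal_add A B) \<noteq> D" using I A B unfolding star_homog_def by blast
  have nzA: "nz_frac D A" and nzB: "nz_frac D B"
    using A(1) B(1) unfolding finite_type_def star_ideal_def by blast+
  have nzAB: "nz_frac D (ideal_add A B)" using ideal_add_nz_frac[OF nzA nzB] .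
  have "G \<subseteq> ideal_add A B"
  proof
    fix g assume "g \<in> G"
    then have "p g \<in> A" "q g \<in> B" "g = p g + q g" using pq A(4) B(4) by auto
    then show "g \<in> ideal_add A B" unfolding ideal_add_def by blast
  qed
  then have "gen D G \<subseteq> ideal_add A B"
    by (rule gen_subset[OF ideal_add_submod[OF nz_frac_submod[OF nzA] nz_frac_submod[OF nzB]]])
  then have "st (gen D G) \<subseteq> st (ideal_add A B)" by (rule st_mono[OF gen_nz_frac[OF G(1,2)] nzAB])
  then have "1 \<in> st (ideal_add A B)" using G(4) by blast
  then have "st (ideal_add A B) = D"
    using st_eq_D_if_one[OF nzAB ideal_add_least[OF submod_D \<open>A \<subseteq> D\<close> \<open>B \<subseteq> D\<close>]] by blast
  then show False using ne by contradiction
qed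

lemma M_of_eq: "star_homog D st I \<Longrightarrow> max_star D st P \<Longrightarrow> I \<subseteq> P \<Longrightarrow> M_of D st I = P"
  unfolding M_of_def using star_homog_unique_max_star by (intro the_equality) blast+

lemma conductor_star_ideal:
  assumes A: "star_ideal D st A" and y0: "y \<noteq> 0"
  shows "star_ideal D st {d \<in> D. d * y \<in> A}"
proof -
  define H where "H = {d \<in> D. d * y \<in> A}"
  have nzA: "nz_frac D A" and smA: "submod D A" using A nz_frac_submod by (auto simp: star_ideal_def)
  have smH: "submod D H" unfolding submod_def H_def
    using zero_in_D smA submod_0 submod_add submod_mult add_in_D mult_in_D
    by (auto simp: distrib_right mult.assoc)
  obtain \<alpha> where \<alpha>: "\<alpha> \<in> A" "\<alpha> \<noteq> 0" using nz_frac_nonzero_elem[OF nzA] by auto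
  obtain p q where pq: "p \<in> D" "q \<in> D" "q \<noteq> 0" "\<alpha> = p / q" by (rule fraction_of_D)
  obtain a b where ab: "a \<in> D" "b \<in> D" "b \<noteq> 0" "y = a / b" by (rule fraction_of_D)
  text \<open>\<open>b p\<close> is a nonzero element of \<open>H\<close>, since \<open>b p y = a q \<alpha>\<close>.\<close>
  have "(b * p) * y = (a * q) * \<alpha>" using ab pq by simp
  moreover have "(a * q) * \<alpha> \<in> A" using submod_mult[OF smA _ \<alpha>(1)] mult_in_D ab pq by blast
  moreover have "b * p \<in> D" "b * p \<noteq> 0" using mult_in_D ab pq \<alpha> by auto
  ultimately have "b * p \<in> H" unfolding H_def by simp
  then have "H \<noteq> {0}" using \<open>b * p \<noteq> 0\<close> by blast
  then have nzH: "nz_frac D H" using nz_frac_if_integral[OF smH] by (auto simp: H_def)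
  have "smul_set y H \<subseteq> A" by (auto simp: smul_set_def H_def mult.commute)
  then have "smul_set y (st H) \<subseteq> A" using st_smul_set_subset[OF nzH y0 A] by blast
  then have "st H \<subseteq> H"
    using st_subset_D[OF nzH] by (auto simp: H_def smul_set_def mult.commute)
  then show ?thesis using star_idealI[OF nzH] by (simp add: H_def)
qed

lemma mem_star_ideal_if_localize:
  assumes A: "star_ideal D st A" and loc: "\<And>M. max_star D st M \<Longrightarrow> y \<in> localize D A M"
  shows "y \<in> A"
proof (cases "y = 0")
  case True then show ?thesis using A submod_0 nz_frac_submod by (auto simp: star_ideal_def)
next
  case False
  define H where "H = {d \<in> D. d * y \<in> A}"
  have H: "star_ideal D st H" "H \<subseteq> D" using conductor_star_ideal[OF A False] by (auto simp: H_def)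
  text \<open>No maximal star ideal contains \<open>H\<close>, because a denominator of \<open>y\<close> in \<open>A D\<^sub>M\<close> lies in \<open>H - M\<close>.\<close>
  have "H = D"
  proof (rule ccontr)
    assume "H \<noteq> D"
    then obtain M where M: "max_star D st M" "H \<subseteq> M" using exists_max_star[OF H] by blast
    obtain c s where cs: "c \<in> A" "s \<in> D" "s \<notin> M" "y = c / s" using loc[OF M(1)] by (rule localizeE)
    have "s \<noteq> 0" using cs max_starD(6)[OF M(1)] by auto
    then have "s \<in> H" using cs by (simp add: H_def)
    then show False using M cs by auto
  qed
  then have "1 \<in> H" using one_in_D by simp
  then show ?thesis by (simp add: H_def)
qed

lemma star_ideal_eq_if_localize_eq:
  assumes A: "star_ideal D st A" and B: "star_ideal D st B"
    and loc: "\<And>M. max_star D st M \<Longrightarrow> localize D A M = localize D B M"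
  shows "A = B"
proof -
  have "X \<subseteq> localize D Y M" if "max_star D st M" "localize D X M = localize D Y M" for X Y M
    using subset_localize[OF max_starD(5)[OF that(1)], of X] that(2) by simp
  then show ?thesis using mem_star_ideal_if_localize[OF A] mem_star_ideal_if_localize[OF B] loc
    by (metis subset_antisym subsetI subsetD)
qed

lemma D_eq_Inter_localization: "D = \<Inter>{localization D P | P. max_star D st P}"
proof
  show "D \<subseteq> \<Inter>{localization D P | P. max_star D st P}"
    using D_subset_localization[OF max_starD(5)] by blast
  show "\<Inter>{localization D P | P. max_star D st P} \<subseteq> D"
  proof
    fix y assume "y \<in> \<Inter>{localization D P | P. max_star D st P}"
    then have "y \<in> localize D D M" if "max_star D st M" for M using that localize_D by blast
    then show "y \<in> D" using mem_star_ideal_if_localize[OF star_ideal_D] by blast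
  qed
qed

subsection \<open>Factorization into super homogeneous ideals implies star-GKD\<close>

lemma star_super_homog_type1D:
  assumes "star_super_homog_type1 D st I"
  shows "star_homog D st I" "star_super_homog D st I" "I \<subseteq> D" "submod D I" "nz_frac D I"
  using assms star_homogD unfolding star_super_homog_type1_def star_super_homog_def by auto

lemma star_super_homog_type1_subset_prime:
  assumes Is: "\<forall>I\<in>set Is. star_super_homog_type1 D st I" and x: "principal_frac D x = st (ideal_prod D Is)"
    and R: "prime_ideal_in D R" "x \<in> R"
  shows "\<exists>I\<in>set Is. I \<subseteq> R"
proof -
  have "\<forall>I\<in>set Is. I \<subseteq> D \<and> submod D I" "\<forall>I\<in>set Is. nz_frac D I"
    using Is star_super_homog_type1D by blast+
  moreover from this have "ideal_prod D Is \<subseteq> principal_frac D x"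
    using st_extensive[OF ideal_prod_nz_frac] x by simp
  ultimately show ?thesis
    using ideal_prod_subset_prime[OF R(1)] principal_frac_subset[OF prime_ideal_submod[OF R(1)] R(2)]
    by (meson order_trans)
qed

lemma exists_super_homog_subset_prime:
  assumes fact: "super_homog_factorial D st" and R: "prime_ideal_in D R" "y \<in> R" "y \<noteq> 0"
  obtains I where "star_super_homog_type1 D st I" "I \<subseteq> R"
proof -
  have "y \<in> D" "inverse y \<notin> D" using R prime_ideal_subset_D prime_ideal_inverse_notin by auto
  then obtain Is where "\<forall>I\<in>set Is. star_super_homog_type1 D st I" "principal_frac D y = st (ideal_prod D Is)"
    using fact R(3) unfolding super_homog_factorial_def by blast
  then show thesis using star_super_homog_type1_subset_prime R(1,2) that by blast
qed

lemma star_invertible_local_generator: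
  assumes G: "finite G" "gen D G \<noteq> {0}" and inv: "star_invertible D st (st (gen D G))"
    and P: "max_star D st P"
  shows "\<exists>\<gamma>0\<in>G. \<gamma>0 \<noteq> 0 \<and> (\<forall>\<gamma>\<in>G. \<gamma> / \<gamma>0 \<in> localization D P)"
proof -
  note P' = max_starD[OF P]
  define J where "J = gen D G"
  have nzJ: "nz_frac D J" using gen_nz_frac[OF G] by (simp add: J_def)
  define X where "X = ideal_mult (st J) (inv_ideal D (st J))"
  have nzX: "nz_frac D X" unfolding X_def using ideal_mult_nz_frac[OF st_nz_frac[OF nzJ] inv_ideal_nz_frac[OF st_nz_frac[OF nzJ]]] .
  have "\<not> X \<subseteq> P"
  proof
    assume "X \<subseteq> P"
    then have "st X \<subseteq> P" using st_least[OF nzX P'(1)] by blast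
    then show False using inv P'(5) one_in_D by (auto simp: star_invertible_def X_def J_def)
  qed
  then obtain f g where fg: "f \<in> st J" "g \<in> inv_ideal D (st J)" "f * g \<notin> P"
    using ideal_mult_not_subset[OF P'(3)] unfolding X_def by blast
  have g0: "g \<noteq> 0" using fg P'(6) by auto
  have gJ: "g * \<gamma> \<in> D" if "\<gamma> \<in> G" for \<gamma>
    using fg(2) gen_contains[OF G(1) that] st_extensive[OF nzJ] by (auto simp: inv_ideal_def J_def)
  text \<open>Some generator \<open>\<gamma>0\<close> has \<open>g \<gamma>0 \<notin> P\<close>; otherwise \<open>g (st J) \<subseteq> P\<close>, contradicting \<open>f g \<notin> P\<close>.\<close>
  have "\<exists>\<gamma>0\<in>G. g * \<gamma>0 \<notin> P"
  proof (rule ccontr)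
    assume "\<not> (\<exists>\<gamma>0\<in>G. g * \<gamma>0 \<notin> P)"
    then have "smul_set g J \<subseteq> P" unfolding J_def using smul_gen_subset[OF P'(3)] by blast
    then have "smul_set g (st J) \<subseteq> P" using st_smul_set_subset[OF nzJ g0 P'(1)] by blast
    then show False using fg by (auto simp: smul_set_def mult.commute)
  qed
  then obtain \<gamma>0 where \<gamma>0: "\<gamma>0 \<in> G" "g * \<gamma>0 \<notin> P" by blast
  have "\<gamma> / \<gamma>0 \<in> localization D P" if "\<gamma> \<in> G" for \<gamma>
    using localization_mem[OF gJ[OF that] gJ[OF \<gamma>0(1)] \<gamma>0(2)] g0 by simp
  moreover have "\<gamma>0 \<noteq> 0" using \<gamma>0 P'(6) by auto
  ultimately show ?thesis using \<gamma>0(1) by blast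
qed

lemma valuation_localization_if_super_homog:
  assumes I: "star_super_homog D st I" and P: "max_star D st P"
  shows "valuation_domain_in (localization D P)"
proof -
  obtain F0 where F0: "finite F0" "gen D F0 \<noteq> {0}" "I = st (gen D F0)"
    using I star_homogD(5) unfolding star_super_homog_def by blast
  text \<open>For \<open>x \<noteq> 0\<close>, the ideal generated by \<open>F0 \<union> x F0\<close> contains \<open>I\<close>, so it is star-invertible and
    locally generated by some \<open>f\<close> or \<open>x f\<close> with \<open>f \<in> F0\<close>; this gives \<open>x\<close> or \<open>1/x\<close> in \<open>D\<^sub>P\<close>.\<close>
  have "x \<in> localization D P \<or> inverse x \<in> localization D P" if x0: "x \<noteq> 0" for x
  proof -
    define G where "G = F0 \<union> (\<lambda>f. x * f) ` F0"
    have G: "finite G" "F0 \<subseteq> G" "(\<lambda>f. x * f) ` F0 \<subseteq> G" using F0(1) by (auto simp: G_def)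
    have "gen D F0 \<subseteq> gen D G" using gen_mono[OF G(1,2)] .
    then have ne: "gen D G \<noteq> {0}" using F0(2) submod_0[OF gen_submod] by blast
    have "I \<subseteq> st (gen D G)"
      using st_mono[OF gen_nz_frac[OF F0(1,2)] gen_nz_frac[OF G(1) ne] \<open>gen D F0 \<subseteq> gen D G\<close>] F0(3) by simp
    then have "star_invertible D st (st (gen D G))"
      using I finite_type_st_gen[OF G(1) ne] unfolding star_super_homog_def by blast
    then obtain \<gamma>0 where \<gamma>0: "\<gamma>0 \<in> G" "\<gamma>0 \<noteq> 0" "\<forall>\<gamma>\<in>G. \<gamma> / \<gamma>0 \<in> localization D P"
      using star_invertible_local_generator[OF G(1) ne _ P] by blast
    show ?thesis
    proof (cases "\<gamma>0 \<in> F0")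
      case True
      then have "(x * \<gamma>0) / \<gamma>0 \<in> localization D P" using \<gamma>0(3) G(3) by blast
      then show ?thesis using \<gamma>0(2) by simp
    next
      case False
      then obtain f where f: "f \<in> F0" "\<gamma>0 = x * f" using \<gamma>0(1) by (auto simp: G_def)
      then have "f / (x * f) \<in> localization D P" using \<gamma>0(3) G(2) by blast
      then show ?thesis using f \<gamma>0(2) by (simp add: field_simps)
    qed
  qed
  then show ?thesis
    unfolding valuation_domain_in_def using localization_domain[OF max_star_prime[OF P]] by blast
qed

context
  assumes fact: "super_homog_factorial D st"
begin

lemma super_homog_factorial_valuation:
  assumes P: "max_star D st P" shows "valuation_domain_in (localization D P)"
proof -
  obtain y where "y \<in> P" "y \<noteq> 0" using nz_frac_nonzero_elem[OF max_starD(2)[OF P]] by blast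
  then obtain I where "star_super_homog_type1 D st I" "I \<subseteq> P"
    using exists_super_homog_subset_prime[OF fact max_star_prime[OF P]] by blast
  then show ?thesis using valuation_localization_if_super_homog P star_super_homog_type1D by blast
qed

lemma super_homog_factorial_finite_max_star:
  assumes x: "x \<in> D" "x \<noteq> 0" shows "finite {P. max_star D st P \<and> x \<in> P}"
proof (cases "inverse x \<in> D")
  case True
  then have "{P. max_star D st P \<and> x \<in> P} = {}"
    using prime_ideal_inverse_notin[OF max_star_prime] x by blast
  then show ?thesis by (metis finite.emptyI)
next
  case False
  then obtain Is where Is: "\<forall>I\<in>set Is. star_super_homog_type1 D st I"
    "principal_frac D x = st (ideal_prod D Is)" using fact x unfolding super_homog_factorial_def by blast
  have "{P. max_star D st P \<and> x \<in> P} \<subseteq> M_of D st ` set Is"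
  proof
    fix P assume "P \<in> {P. max_star D st P \<and> x \<in> P}"
    then have P: "max_star D st P" "x \<in> P" by auto
    then obtain I where "I \<in> set Is" "I \<subseteq> P"
      using star_super_homog_type1_subset_prime[OF Is max_star_prime] by blast
    then show "P \<in> M_of D st ` set Is" using M_of_eq[OF _ P(1)] Is star_super_homog_type1D by force
  qed
  then show ?thesis by (rule finite_subset) simp
qed

lemma super_homog_factorial_independent:
  assumes P: "max_star D st P" and Q: "max_star D st Q"
    and R: "prime_ideal_in D R" "R \<noteq> {0}" "R \<subseteq> P" "R \<subseteq> Q"
  shows "P = Q"
proof -
  obtain y where "y \<in> R" "y \<noteq> 0" using R(1,2) prime_ideal_0 by blast
  then obtain I where I: "star_super_homog_type1 D st I" "I \<subseteq> R"
    using exists_super_homog_subset_prime[OF fact R(1)] by blast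
  then show ?thesis
    using star_homog_unique_max_star[OF star_super_homog_type1D(1)[OF I(1)] P Q] R(3,4) by blast
qed

lemma super_homog_factorial_height_one:
  assumes P: "max_star D st P" shows "height_one D P"
proof -
  have "Q = P" if Q: "prime_ideal_in D Q" "Q \<noteq> {0}" "Q \<subseteq> P" for Q
  proof -
    obtain y where "y \<in> Q" "y \<noteq> 0" using Q prime_ideal_0 by blast
    then obtain I where I: "star_super_homog_type1 D st I" "I \<subseteq> Q"
      using exists_super_homog_subset_prime[OF fact Q(1)] by blast
    have MI: "M_of D st I = P" using M_of_eq[OF star_super_homog_type1D(1)[OF I(1)] P] I(2) Q(3) by blast
    text \<open>Type \<open>1\<close>: every \<open>z \<in> P\<close> has a power in \<open>I \<subseteq> Q\<close>, so \<open>P \<subseteq> Q\<close> as \<open>Q\<close> is prime.\<close>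
    have "z \<in> Q" if z: "z \<in> P" "z \<noteq> 0" for z
    proof -
      obtain n where "principal_frac (localization D P) (z ^ n) \<inter> D \<subseteq> I"
        using I(1) MI z unfolding star_super_homog_type1_def star_homog_type1_def by blast
      moreover have "z \<in> D" using z max_starD(4)[OF P] by blast
      moreover have "z ^ n \<in> principal_frac (localization D P) (z ^ n)"
        using localization_one[OF max_star_prime[OF P]] by (force simp: principal_frac_def)
      ultimately have "z ^ n \<in> Q" using I(2) power_in_D by blast
      then show ?thesis using prime_ideal_power[OF Q(1) \<open>z \<in> D\<close>] by blast
    qed
    then show ?thesis using Q prime_ideal_0 by blast
  qed
  moreover have "P \<noteq> {0}" using max_starD(2)[OF P] by (simp add: nz_frac_def)
  ultimately show ?thesis using max_star_prime[OF P] unfolding height_one_def by blast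
qed

theorem star_GKD_if_super_homog_factorial: "star_GKD D st"
  unfolding star_GKD_def star_IRKT_def
  using super_homog_factorial_valuation D_eq_Inter_localization super_homog_factorial_finite_max_star
    super_homog_factorial_independent super_homog_factorial_height_one by blast

end

end

locale star_GKD_domain = star_domain_fc +
  assumes GKD: "star_GKD D st"
begin

lemma valuation_localization: "max_star D st P \<Longrightarrow> valuation_domain_in (localization D P)"
  using GKD unfolding star_GKD_def star_IRKT_def by simp

lemma height_one_max_star: "max_star D st P \<Longrightarrow> height_one D P"
  using GKD unfolding star_GKD_def by simp

lemma finite_max_star: "x \<in> D \<Longrightarrow> x \<noteq> 0 \<Longrightarrow> finite {P. max_star D st P \<and> x \<in> P}"
  using GKD unfolding star_GKD_def star_IRKT_def by simp

text \<open>Locally at \<open>M\<close>, the finitely generated ideal \<open>gen D F\<close> is generated by a single \<open>\<gamma>0 \<in> F\<close>;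
  a common denominator of the \<open>\<gamma> / \<gamma>0\<close> divided by \<open>\<gamma>0\<close> is an element of its inverse that is a unit at \<open>M\<close>.\<close>

lemma inv_ideal_unit_at_max_star:
  assumes M: "max_star D st M" and F: "finite F" "gen D F \<noteq> {0}"
  shows "\<exists>\<gamma>0\<in>F. \<exists>h\<in>inv_ideal D (gen D F). h * \<gamma>0 \<in> D \<and> h * \<gamma>0 \<notin> M"
proof -
  note M' = max_star_prime[OF M]
  interpret V: quotient_domain "localization D M" using localization_quotient_domain[OF M'] .
  have "\<exists>f\<in>F. f \<noteq> 0"
  proof (rule ccontr)
    assume "\<not> (\<exists>f\<in>F. f \<noteq> 0)"
    then have "gen D F \<subseteq> {0}" unfolding gen_def by (auto intro!: sum.neutral)
    then show False using F(2) submod_0[OF gen_submod, of F] by blast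
  qed
  then obtain \<gamma>0 where \<gamma>0: "\<gamma>0 \<in> F" "\<gamma>0 \<noteq> 0" "\<forall>\<gamma>\<in>F. \<gamma> / \<gamma>0 \<in> localization D M"
    using V.valuation_domain_divides_finite[OF valuation_localization[OF M] F(1)] by blast
  obtain s where s: "s \<in> D" "s \<notin> M" "\<forall>v\<in>(\<lambda>\<gamma>. \<gamma> / \<gamma>0) ` F. s * v \<in> D"
    using common_denominator_localization[OF M', of "(\<lambda>\<gamma>. \<gamma> / \<gamma>0) ` F"] F(1) \<gamma>0(3) by blast
  define h where "h = s / \<gamma>0"
  have hF: "h * \<gamma> \<in> D" if "\<gamma> \<in> F" for \<gamma> using s(3) that by (simp add: h_def)
  have "h * z \<in> D" if "z \<in> gen D F" for z
  proof -
    from that obtain c where c: "\<forall>f\<in>F. c f \<in> D" "z = (\<Sum>f\<in>F. c f * f)" by (auto simp: gen_def)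
    then have "h * z = (\<Sum>f\<in>F. c f * (h * f))" by (simp add: sum_distrib_left mult.left_commute)
    moreover have "c f * (h * f) \<in> D" if "f \<in> F" for f using c(1) hF[OF that] that mult_in_D by blast
    ultimately show ?thesis by (simp add: sum_in_D)
  qed
  then have "h \<in> inv_ideal D (gen D F)" by (simp add: inv_ideal_def mult.commute)
  moreover have "h * \<gamma>0 = s" using \<gamma>0(2) by (simp add: h_def)
  ultimately show ?thesis using \<gamma>0(1) s by auto
qed

lemma st_subset_localize:
  assumes M: "max_star D st M" and A: "nz_frac D A"
  shows "st A \<subseteq> localize D A M"
proof
  fix y assume "y \<in> st A"
  then obtain F where F: "finite F" "gen D F \<noteq> {0}" "gen D F \<subseteq> A" "y \<in> st (gen D F)"
    using st_finite_character[OF A] by blast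
  have nzJ: "nz_frac D (gen D F)" using gen_nz_frac[OF F(1,2)] .
  obtain \<gamma>0 h where gh: "\<gamma>0 \<in> F" "h \<in> inv_ideal D (gen D F)" "h * \<gamma>0 \<in> D" "h * \<gamma>0 \<notin> M"
    using inv_ideal_unit_at_max_star[OF M F(1,2)] by blast
  have "h \<noteq> 0" "\<gamma>0 \<noteq> 0" using gh max_starD(6)[OF M] by auto
  have "h \<in> inv_ideal D (st (gen D F))" using gh(2) inv_ideal_st[OF nzJ] by simp
  then have "h * y \<in> D" using F(4) by (simp add: inv_ideal_def)
  moreover have "\<gamma>0 \<in> A" using gen_contains[OF F(1) gh(1)] F(3) by blast
  ultimately have "((h * y) * \<gamma>0) / (h * \<gamma>0) \<in> localize D A M"
    using localize_mem[OF submod_mult[OF nz_frac_submod[OF A]] gh(3,4)] by blast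
  then show "y \<in> localize D A M" using \<open>h \<noteq> 0\<close> \<open>\<gamma>0 \<noteq> 0\<close> by simp
qed

lemma localize_st:
  assumes M: "max_star D st M" and A: "nz_frac D A" shows "localize D (st A) M = localize D A M"
proof
  show "localize D (st A) M \<subseteq> localize D A M"
    using localize_mono[OF st_subset_localize[OF M A]] localize_localize_subset[OF max_star_prime[OF M]]
    by (rule subset_trans)
  show "localize D A M \<subseteq> localize D (st A) M" using localize_mono[OF st_extensive[OF A]] .
qed

lemma finite_type_star_invertible:
  assumes J: "finite_type D st J" shows "star_invertible D st J"
proof -
  obtain F where F: "finite F" "gen D F \<noteq> {0}" "J = st (gen D F)"
    using J unfolding finite_type_def fin_gen_nz_def by blast
  have nz0: "nz_frac D (gen D F)" using gen_nz_frac[OF F(1,2)] .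
  have nzJ: "nz_frac D J" using st_nz_frac[OF nz0] F(3) by simp
  define X where "X = ideal_mult J (inv_ideal D J)"
  have nzX: "nz_frac D X" unfolding X_def using ideal_mult_nz_frac[OF nzJ inv_ideal_nz_frac[OF nzJ]] .
  have "st X = D"
  proof (rule ccontr)
    assume "st X \<noteq> D"
    moreover have "st X \<subseteq> D" using st_subset_D[OF nzX] ideal_mult_inv_subset_D unfolding X_def by blast
    ultimately obtain M where M: "max_star D st M" "st X \<subseteq> M"
      using exists_max_star[OF star_ideal_st[OF nzX]] by blast
    obtain \<gamma>0 h where gh: "\<gamma>0 \<in> F" "h \<in> inv_ideal D (gen D F)" "h * \<gamma>0 \<notin> M"
      using inv_ideal_unit_at_max_star[OF M(1) F(1,2)] by blast
    have "\<gamma>0 \<in> J" using gen_contains[OF F(1) gh(1)] F(3) st_extensive[OF nz0] by blast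
    moreover have "h \<in> inv_ideal D J" using gh(2) inv_ideal_st[OF nz0] F(3) by simp
    ultimately have "\<gamma>0 * h \<in> st X" using mult_in_ideal_mult st_extensive[OF nzX] unfolding X_def by blast
    then show False using gh(3) M(2) by (auto simp: mult.commute)
  qed
  then show ?thesis unfolding star_invertible_def X_def .
qed

lemma power_in_principal_localization:
  assumes P: "max_star D st P" and x: "x \<in> P" "x \<noteq> 0" and w: "w \<in> P"
  shows "\<exists>n\<ge>1. \<exists>v\<in>localization D P. w ^ n = x * v"
proof -
  define R where "R = {d \<in> D. \<exists>n\<ge>1. \<exists>v\<in>localization D P. d ^ n = x * v}"
  note R = radical_principal_localization_prime[OF max_star_prime[OF P] valuation_localization[OF P] x(1)]
  have "R = P" using height_one_max_star[OF P] R x(2) unfolding height_one_def R_def by blast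
  then show ?thesis using w unfolding R_def by blast
qed

subsection \<open>The components \<open>x D\<^sub>P \<inter> D\<close> of a principal ideal\<close>

context
  fixes x assumes x: "x \<in> D" "x \<noteq> 0"
begin

lemma mem_principal_component: "prime_ideal_in D P \<Longrightarrow> x \<in> principal_component D x P"
  unfolding principal_component_iff using x localization_one by (metis mult_1_right)

lemma principal_component_nz_frac: "prime_ideal_in D P \<Longrightarrow> nz_frac D (principal_component D x P)"
  using nz_frac_if_integral[OF principal_component_submod principal_component_subset_D]
    mem_principal_component x(2) by blast

lemma principal_component_subset_max_star:
  assumes P: "max_star D st P" "x \<in> P" shows "principal_component D x P \<subseteq> P"
proof
  note P' = max_star_prime[OF P(1)]
  fix u assume "u \<in> principal_component D x P"
  then obtain v where v: "u \<in> D" "v \<in> localization D P" "u = x * v" unfolding principal_component_iff by blast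
  then obtain a s where as: "a \<in> D" "s \<in> D" "s \<notin> P" "v = a / s" by (meson localizationE)
  have "s \<noteq> 0" using as prime_ideal_0[OF P'] by auto
  then have "s * u = a * x" using v as by simp
  then have "s * u \<in> P" using submod_mult[OF max_starD(3)[OF P(1)] as(1) P(2)] by simp
  then show "u \<in> P" using prime_ideal_mult_notin[OF P' as(2) v(1) as(3)] by blast
qed

text \<open>A maximal star ideal \<open>M \<noteq> P\<close> contains no \<open>x D\<^sub>P \<inter> D\<close>: pick \<open>w \<in> P - M\<close>; a power of \<open>w\<close>
  lies in \<open>x D\<^sub>P\<close> because \<open>D\<^sub>P\<close> is a valuation domain of height one.\<close>

lemma principal_component_not_subset:
  assumes P: "max_star D st P" "x \<in> P" and M: "max_star D st M" "M \<noteq> P"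
  shows "\<exists>u\<in>principal_component D x P. u \<notin> M"
proof (cases "x \<in> M")
  case False then show ?thesis using mem_principal_component[OF max_star_prime[OF P(1)]] by blast
next
  case True
  obtain w where w: "w \<in> P" "w \<notin> M" using max_star_eq_if_subset[OF P(1) M(1)] M(2) by blast
  then obtain n v where "v \<in> localization D P" "w ^ n = x * v"
    using power_in_principal_localization[OF P x(2)] by blast
  moreover have "w \<in> D" using w max_starD(4)[OF P(1)] by blast
  ultimately have "w ^ n \<in> principal_component D x P" unfolding principal_component_iff
    using power_in_D by blast
  moreover have "w ^ n \<notin> M" using prime_ideal_power[OF max_star_prime[OF M(1)] \<open>w \<in> D\<close>] w(2) by blast
  ultimately show ?thesis by blast
qed

lemma localize_principal_component:
  assumes P: "prime_ideal_in D P"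
  shows "localize D (principal_component D x P) P = principal_frac (localization D P) x"
proof
  show "localize D (principal_component D x P) P \<subseteq> principal_frac (localization D P) x"
  proof
    fix z assume "z \<in> localize D (principal_component D x P) P"
    then obtain u s where us: "u \<in> principal_component D x P" "s \<in> D" "s \<notin> P" "z = u / s"
      by (rule localizeE)
    then obtain v where v: "v \<in> localization D P" "u = x * v" unfolding principal_component_iff by blast
    have "v * inverse s \<in> localization D P"
      using localization_mult[OF P v(1) localization_inverse[OF us(2,3)]] .
    moreover have "z = x * (v * inverse s)" using us v by (simp add: divide_inverse)
    ultimately show "z \<in> principal_frac (localization D P) x" unfolding principal_frac_def by blast
  qed
  show "principal_frac (localization D P) x \<subseteq> localize D (principal_component D x P) P"
  proof
    fix z assume "z \<in> principal_frac (localization D P) x"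
    then obtain a s where as: "a \<in> D" "s \<in> D" "s \<notin> P" "z = (x * a) / s"
      by (auto simp: principal_frac_def elim!: localizationE)
    have "x * a \<in> principal_component D x P"
      unfolding principal_component_iff using mult_in_D x(1) as D_subset_localization[OF prime_ideal_one[OF P]]
      by blast
    then show "z \<in> localize D (principal_component D x P) P" using localize_mem as by simp
  qed
qed

lemma principal_component_star_ideal:
  assumes P: "max_star D st P" shows "star_ideal D st (principal_component D x P)"
proof -
  note nz = principal_component_nz_frac[OF max_star_prime[OF P]]
  have "st (principal_component D x P) \<subseteq> principal_component D x P"
    using st_subset_D[OF nz principal_component_subset_D] st_subset_localize[OF P nz]
      localize_principal_component[OF max_star_prime[OF P]]
    unfolding principal_component_def by blast
  then show ?thesis using star_idealI[OF nz] by blast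
qed

text \<open>Both sides agree locally: at \<open>P\<close> because \<open>x \<in> G\<close>, and elsewhere because \<open>G\<close> meets the complement.\<close>

lemma principal_component_subset_st_gen:
  assumes P: "max_star D st P" and G: "finite G" "x \<in> G" "G \<subseteq> D"
    and away: "\<And>M. max_star D st M \<Longrightarrow> M \<noteq> P \<Longrightarrow> \<exists>u\<in>G. u \<notin> M"
  shows "principal_component D x P \<subseteq> st (gen D G)"
proof
  fix y assume y: "y \<in> principal_component D x P"
  have ne: "gen D G \<noteq> {0}" using gen_contains[OF G(1,2)] x(2) by blast
  have nzJ: "nz_frac D (gen D G)" using gen_nz_frac[OF G(1) ne] .
  have "y \<in> localize D (gen D G) M" if M: "max_star D st M" for M
  proof (cases "M = P")
    case True
    have "y \<in> localize D (principal_frac D x) P"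
      using y localize_principal_frac unfolding principal_component_def by blast
    then show ?thesis
      using localize_mono[OF principal_frac_subset[OF gen_submod gen_contains[OF G(1,2)]]] True by blast
  next
    case False
    then obtain u where "u \<in> gen D G" "u \<notin> M" using away[OF M] gen_contains[OF G(1)] by blast
    moreover have "gen D G \<subseteq> D" using gen_subset[OF submod_D G(3)] .
    ultimately have "localize D (gen D G) M = localization D M"
      using localize_eq_localization[OF gen_submod _ _ _ max_star_prime[OF M]] by blast
    then show ?thesis
      using y principal_component_subset_D D_subset_localization[OF max_starD(5)[OF M]] by blast
  qed
  then have "y \<in> localize D (st (gen D G)) M" if "max_star D st M" for M
    using that localize_mono[OF st_extensive[OF nzJ]] by blast
  then show "y \<in> st (gen D G)" using mem_star_ideal_if_localize[OF star_ideal_st[OF nzJ]] by blast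
qed

lemma principal_component_finite_type:
  assumes P: "max_star D st P" "x \<in> P" shows "finite_type D st (principal_component D x P)"
proof -
  define I where "I = principal_component D x P"
  have I: "star_ideal D st I" "submod D I" "I \<subseteq> D" "x \<in> I"
    using principal_component_star_ideal[OF P(1)] principal_component_submod principal_component_subset_D
      mem_principal_component max_star_prime[OF P(1)] unfolding I_def by blast+
  text \<open>Generators: \<open>x\<close> and one element of \<open>I\<close> outside each of the finitely many other maximal star
    ideals containing \<open>x\<close>.\<close>
  define S where "S = {M. max_star D st M \<and> x \<in> M} - {P}"
  have "\<forall>M\<in>S. \<exists>u. u \<in> I \<and> u \<notin> M"
    using principal_component_not_subset[OF P] unfolding S_def I_def by blast
  then obtain g where g: "\<And>M. M \<in> S \<Longrightarrow> g M \<in> I \<and> g M \<notin> M" by metis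
  define G where "G = insert x (g ` S)"
  have G: "finite G" "G \<subseteq> I" "x \<in> G"
    using finite_max_star[OF x] g I(4) unfolding G_def S_def by auto
  have "\<exists>u\<in>G. u \<notin> M" if "max_star D st M" "M \<noteq> P" for M
    using that G(3) g unfolding G_def S_def by (cases "x \<in> M") auto
  then have "I \<subseteq> st (gen D G)"
    using principal_component_subset_st_gen[OF P(1) G(1,3)] G(2) I(3) unfolding I_def by blast
  moreover have ne: "gen D G \<noteq> {0}" using gen_contains[OF G(1,3)] x(2) by blast
  then have "st (gen D G) \<subseteq> I" using st_least[OF gen_nz_frac[OF G(1)] I(1) gen_subset[OF I(2) G(2)]] by blast
  ultimately have "I = st (gen D G)" by blast
  then show ?thesis using finite_type_st_gen[OF G(1) ne] by (simp add: I_def)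
qed

lemma principal_component_star_homog:
  assumes P: "max_star D st P" "x \<in> P" shows "star_homog D st (principal_component D x P)"
proof -
  note P' = max_starD[OF P(1)]
  have inP: "A \<subseteq> P" if A: "finite_type D st A" "A \<subseteq> D" "A \<noteq> D" "principal_component D x P \<subseteq> A" for A
  proof -
    obtain M where M: "max_star D st M" "A \<subseteq> M"
      using exists_max_star A unfolding finite_type_def by blast
    then have "M = P" using principal_component_not_subset[OF P M(1)] A(4) by blast
    then show ?thesis using M by simp
  qed
  have "st (ideal_add A B) \<noteq> D"
    if "finite_type D st A" "A \<subseteq> D" "A \<noteq> D" "principal_component D x P \<subseteq> A"
      "finite_type D st B" "B \<subseteq> D" "B \<noteq> D" "principal_component D x P \<subseteq> B" for A B
  proof -
    have nz: "nz_frac D A" "nz_frac D B" using that unfolding finite_type_def star_ideal_def by blast+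
    have "ideal_add A B \<subseteq> P" using ideal_add_least[OF P'(3)] inP that by blast
    then have "st (ideal_add A B) \<subseteq> P" using st_least[OF ideal_add_nz_frac[OF nz] P'(1)] by blast
    then show ?thesis using P'(5) one_in_D by blast
  qed
  moreover have "principal_component D x P \<noteq> D"
    using principal_component_subset_max_star[OF P] P'(5) one_in_D by blast
  ultimately show ?thesis
    unfolding star_homog_def using principal_component_subset_D principal_component_finite_type[OF P]
    by blast
qed

lemma principal_component_super_homog_type1:
  assumes P: "max_star D st P" "x \<in> P" shows "star_super_homog_type1 D st (principal_component D x P)"
proof -
  note H = principal_component_star_homog[OF P]
  have MI: "M_of D st (principal_component D x P) = P"
    using M_of_eq[OF H P(1) principal_component_subset_max_star[OF P]] .
  have "\<exists>n\<ge>1. principal_frac (localization D P) (y ^ n) \<inter> D \<subseteq> principal_component D x P"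
    if y: "y \<in> P" for y
  proof -
    obtain n v where nv: "n \<ge> 1" "v \<in> localization D P" "y ^ n = x * v"
      using power_in_principal_localization[OF P x(2) y] by blast
    have "principal_frac (localization D P) (y ^ n) \<subseteq> principal_frac (localization D P) x"
      using nv localization_mult[OF max_star_prime[OF P(1)] nv(2)] by (auto simp: principal_frac_def mult.assoc)
    then show ?thesis using nv(1) unfolding principal_component_def by blast
  qed
  then show ?thesis
    unfolding star_super_homog_type1_def star_homog_type1_def star_super_homog_def MI
    using H finite_type_star_invertible by blast
qed

lemma localize_prod_principal_components:
  assumes "distinct Ps" "\<forall>P\<in>set Ps. max_star D st P \<and> x \<in> P" "M \<in> set Ps"
  shows "localize D (ideal_prod D (map (principal_component D x) Ps)) M
       = localize D (principal_component D x M) M"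
  using assms
proof (induction Ps)
  case (Cons P Ps)
  have M: "max_star D st M" using Cons.prems by auto
  note M' = max_star_prime[OF M]
  have comps: "\<forall>I\<in>set (map (principal_component D x) Ps). I \<subseteq> D \<and> submod D I"
    using Cons.prems principal_component_subset_D principal_component_submod max_star_prime by auto
  have rest: "ideal_prod D (map (principal_component D x) Ps) \<subseteq> D"
    "submod D (ideal_prod D (map (principal_component D x) Ps))"
    using ideal_prod_subset_D[OF comps] ideal_prod_submod comps by blast+
  show ?case
  proof (cases "P = M")
    case True
    have "\<forall>I\<in>set (map (principal_component D x) Ps). I \<subseteq> D \<and> submod D I \<and> \<not> I \<subseteq> M"
      using comps principal_component_not_subset Cons.prems True by fastforce
    then obtain v where v: "v \<in> ideal_prod D (map (principal_component D x) Ps)" "v \<notin> M"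
      using ideal_prod_not_subset_prime[OF M'] by blast
    have "localize D (ideal_mult (principal_component D x M) (ideal_prod D (map (principal_component D x) Ps))) M
        = localize D (principal_component D x M) M"
      by (rule localize_ideal_mult_right[OF principal_component_submod[OF M'] rest(1) v M'])
    then show ?thesis using True by simp
  next
    case False
    obtain u where u: "u \<in> principal_component D x P" "u \<notin> M"
      using principal_component_not_subset[of P M] Cons.prems False by auto
    have "localize D (ideal_mult (principal_component D x P) (ideal_prod D (map (principal_component D x) Ps))) M
        = localize D (ideal_prod D (map (principal_component D x) Ps)) M"
      by (rule localize_ideal_mult_left[OF rest(2) principal_component_subset_D u M'])
    then show ?thesis using Cons False by simp
  qed
qed simp

lemma principal_frac_eq_st_prod_principal_components:
  "\<exists>Is. (\<forall>I\<in>set Is. star_super_homog_type1 D st I) \<and> principal_frac D x = st (ideal_prod D Is)"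
proof -
  obtain Ps where Ps: "distinct Ps" "set Ps = {P. max_star D st P \<and> x \<in> P}"
    using finite_distinct_list[OF finite_max_star[OF x]] by blast
  define Is where "Is = map (principal_component D x) Ps"
  have Is: "\<forall>I\<in>set Is. I \<subseteq> D \<and> submod D I" "\<forall>I\<in>set Is. nz_frac D I"
    using Ps principal_component_subset_D principal_component_submod principal_component_nz_frac
      max_star_prime unfolding Is_def by auto
  note nzp = ideal_prod_nz_frac[OF Is(2)]
  have "localize D (principal_frac D x) M = localize D (st (ideal_prod D Is)) M" if M: "max_star D st M" for M
  proof (cases "x \<in> M")
    case True
    then have "localize D (ideal_prod D Is) M = localize D (principal_component D x M) M"
      using localize_prod_principal_components[OF Ps(1)] Ps(2) M unfolding Is_def by auto
    then show ?thesis
      using localize_st[OF M nzp] localize_principal_component[OF max_star_prime[OF M]]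
        localize_principal_frac by simp
  next
    case False
    have "\<not> I \<subseteq> M" if I: "I \<in> set Is" for I
    proof -
      obtain P where "max_star D st P" "I = principal_component D x P"
        using I Ps(2) unfolding Is_def by auto
      then show ?thesis using mem_principal_component[OF max_star_prime] False by blast
    qed
    then have "\<forall>I\<in>set Is. I \<subseteq> D \<and> submod D I \<and> \<not> I \<subseteq> M" using Is(1) by blast
    then obtain u where "u \<in> ideal_prod D Is" "u \<notin> M"
      using ideal_prod_not_subset_prime[OF max_star_prime[OF M]] by blast
    then show ?thesis
      using localize_st[OF M nzp] localize_principal_frac_eq_localization[OF x(1) False max_star_prime[OF M]]
        localize_eq_localization[OF ideal_prod_submod ideal_prod_subset_D _ _ max_star_prime[OF M]] Is(1)
      by simp
  qed
  then have "principal_frac D x = st (ideal_prod D Is)"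
    by (rule star_ideal_eq_if_localize_eq[OF star_ideal_principal[OF x(2)] star_ideal_st[OF nzp]])
  moreover have "\<forall>I\<in>set Is. star_super_homog_type1 D st I"
    using Ps(2) principal_component_super_homog_type1 unfolding Is_def by auto
  ultimately show ?thesis by blast
qed

end

theorem super_homog_factorial_if_star_GKD: "super_homog_factorial D st"
  unfolding super_homog_factorial_def using principal_frac_eq_st_prod_principal_components by blast

end

theorem propositionQ5:
  fixes D :: "'a::field set" and st :: "'a set \<Rightarrow> 'a set"
  assumes "is_domain_in D"
    and "star_op D st"
    and "finite_character D st"
  shows "(\<forall>x\<in>D. x \<noteq> 0 \<and> inverse x \<notin> D \<longrightarrow>
            (\<exists>Is. (\<forall>I\<in>set Is. star_super_homog_type1 D st I) \<and>
                  principal_frac D x = st (ideal_prod D Is)))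
         \<longleftrightarrow> star_GKD D st"
proof -
  interpret star_domain_fc D st using assms by unfold_locales
  have "super_homog_factorial D st \<longleftrightarrow> star_GKD D st"
  proof
    show "super_homog_factorial D st \<Longrightarrow> star_GKD D st" by (rule star_GKD_if_super_homog_factorial)
    assume "star_GKD D st"
    then interpret star_GKD_domain D st by unfold_locales
    show "super_homog_factorial D st" by (rule super_homog_factorial_if_star_GKD)
  qed
  then show ?thesis unfolding super_homog_factorial_def .
qed

end
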